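(* Let $x^*$ be a locally optimal solution of the SDCMPCC $\min_x\{\varphi(x)\ \text{s.t.}\ \Upsilon(x)\in K\times\Omega\}$ and suppose \[ \mathrm{Sp}\big(\mathcal{N}_{K\times\Omega}(\Upsilon(x^* ))\big)\cap\mathrm{Ker}(\nabla\Upsilon(x^* ))=\{0\}. \] Then $\widehat{\mathcal{M}}(x^* )=\mathcal{M}(x^* )=\mathcal{M}^c(x^* )$ is a singleton $\{(\xi^*,\Gamma^* )\}$, and for every $d\in\mathcal{C}(x^* )$, \[ \langle d,\nabla^2_{xx}L(x^*,\xi^*,\Gamma^* )d\rangle-\sigma\big((\xi^*,\Gamma^* )\mid\mathcal{T}^2_{K\times\Omega}(\Upsilon(x^* );\Upsilon'(x^* )d)\big)\ge0. \]
   Context: Standing setting: $\mathbb{X},\mathbb{Y}$ finite-dimensional real inner product spaces; $\mathbb{S}^n$ the real symmetric $n\times n$ matrices with trace inner product; $\mathbb{S}^n_\pm$ the positive/negative semidefinite cones. $\varphi:\mathbb{X}\to\mathbb{R}$, $h:\mathbb{X}\to\mathbb{Y}$, $\theta,\zeta:\mathbb{X}\to\mathbb{S}^n$ twice differentiable; $K\subseteq\mathbb{Y}$ a closed convex cone, second-order regular. $\Omega:=\{(X,Y)\mid X\in\mathbb{S}^n_+,Y\in\mathbb{S}^n_-,\langle X,Y\rangle=0\}$, $\Theta(x)=(\theta(x),\zeta(x))$, $\Upsilon(x)=(h(x),\Theta(x))$. $\mathrm{Sp}(\cdot)$ is the linear span; $\nabla\Upsilon(x)$ is the adjoint of the derivative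 $\Upsilon'(x)$. For a closed set $C$ at $y\in C$: Bouligand tangent cone $\mathcal{T}_C(y)$; regular normal cone $\widehat{\mathcal{N}}_C(y)=[\mathcal{T}_C(y)]^\circ$; limiting normal cone $\mathcal{N}_C(y)=\{v\mid\exists y^k\to y\text{ in }C,\ v^k\to v,\ v^k\in\widehat{\mathcal{N}}_C(y^k)\}$; Clarke normal cone $\mathcal{N}^c_C(y)=\mathrm{cl\,co}\,\mathcal{N}_C(y)$; outer second-order tangent set $\mathcal{T}^2_C(y;v)=\{w\mid\exists t_k\downarrow0,\ \mathrm{dist}(y+t_kv+\tfrac12t_k^2w,C)=o(t_k^2)\}$. $\sigma(\cdot\mid T)$ is the support function. Critical cone $\mathcal{C}(x)=\{d\mid\varphi'(x)d\le0,\ \Upsilon'(x)d\in\mathcal{T}_{K\times\Omega}(\Upsilon(x))\}$; Lagrangian $L(x,\xi,\Gamma)=\varphi(x)+\langle\xi,h(x)\rangle+\langle\Gamma,\Theta(x)\rangle$; multiplier sets $\widehat{\mathcal{M}}(x),\mathcal{M}(x),\mathcal{M}^c(x)$ are the sets of $(\xi,\Gamma)\in\mathbb{Y}\times(\mathbb{S}^n\times\mathbb{S}^n)$ with $\nabla_xL(x,\xi,\Gamma)=0$ and $(\xi,\Gamma)$ in $\widehat{\mathcal{N}}_{K\times\Omega}(\Upsilon(x))$, $\mathcal{N}_{K\times\Omega}(\Upsilon(x))$, $\mathcal{N}^c_{K\times\Omega}(\Upsilon(x))$ respectively. *)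

theory Defs
  imports "HOL-Analysis.Analysis"
begin

(* ---------- matrix conventions: S^n inside real^'n^'n; the inner product on
   real^'n^'n is sum_ij A_ij B_ij = trace(A^T B), i.e. the trace inner product on S^n ---------- *)

definition sym_mats :: "(real^'n^'n) set" where
  "sym_mats = {A. transpose A = A}"

definition psd_cone :: "(real^'n^'n) set" where
  "psd_cone = {A \<in> sym_mats. \<forall>v. 0 \<le> v \<bullet> (A *v v)}"

definition nsd_cone :: "(real^'n^'n) set" where
  "nsd_cone = {A \<in> sym_mats. \<forall>v. v \<bullet> (A *v v) \<le> 0}"

definition Omega_set :: "((real^'n^'n) \<times> (real^'n^'n)) set" where
  "Omega_set = {(X, Y). X \<in> psd_cone \<and> Y \<in> nsd_cone \<and> X \<bullet> Y = 0}"

definition tangent_cone :: "'a::real_normed_vector set \<Rightarrow> 'a \<Rightarrow> 'a set" where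
  "tangent_cone C y = {v. \<exists>t::nat \<Rightarrow> real. \<exists>z::nat \<Rightarrow> 'a.
      (\<forall>k. 0 < t k) \<and> t \<longlonglongrightarrow> 0 \<and> (\<forall>k. z k \<in> C) \<and>
      (\<lambda>k. (1 / t k) *\<^sub>R (z k - y)) \<longlonglongrightarrow> v}"

(* regular normal cone = polar of the tangent cone, computed in the ambient space E
   (a linear subspace containing C) *)
definition reg_normal_cone :: "'a::real_inner set \<Rightarrow> 'a set \<Rightarrow> 'a \<Rightarrow> 'a set" where
  "reg_normal_cone E C y = {v \<in> E. \<forall>w \<in> tangent_cone C y. v \<bullet> w \<le> 0}"

definition lim_normal_cone :: "'a::real_inner set \<Rightarrow> 'a set \<Rightarrow> 'a \<Rightarrow> 'a set" where
  "lim_normal_cone E C y = {v. \<exists>yk::nat \<Rightarrow> 'a. \<exists>vk::nat \<Rightarrow> 'a.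
      (\<forall>k. yk k \<in> C) \<and> yk \<longlonglongrightarrow> y \<and> vk \<longlonglongrightarrow> v \<and>
      (\<forall>k. vk k \<in> reg_normal_cone E C (yk k))}"

definition clarke_normal_cone :: "'a::real_inner set \<Rightarrow> 'a set \<Rightarrow> 'a \<Rightarrow> 'a set" where
  "clarke_normal_cone E C y = closure (convex hull (lim_normal_cone E C y))"

definition outer_so_tangent :: "'a::real_normed_vector set \<Rightarrow> 'a \<Rightarrow> 'a \<Rightarrow> 'a set" where
  "outer_so_tangent C y v = {w. \<exists>t::nat \<Rightarrow> real. (\<forall>k. 0 < t k) \<and> t \<longlonglongrightarrow> 0 \<and>
      (\<lambda>k. infdist (y + t k *\<^sub>R v + ((t k)\<^sup>2 / 2) *\<^sub>R w) C / (t k)\<^sup>2) \<longlonglongrightarrow> 0}"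

definition inner_so_tangent :: "'a::real_normed_vector set \<Rightarrow> 'a \<Rightarrow> 'a \<Rightarrow> 'a set" where
  "inner_so_tangent C y v = {w.
      ((\<lambda>t. infdist (y + t *\<^sub>R v + (t\<^sup>2 / 2) *\<^sub>R w) C / t\<^sup>2) \<longlongrightarrow> 0) (at_right 0)}"

(* second-order regularity (Bonnans-Shapiro, Def. 3.85) at a point, and of a set.
   "dist(r_k, T) \<rightarrow> 0" is written out so that dist to an empty set is +infinity. *)
definition so_regular_at :: "'a::real_normed_vector set \<Rightarrow> 'a \<Rightarrow> bool" where
  "so_regular_at C y \<longleftrightarrow> (\<forall>h \<in> tangent_cone C y.
      outer_so_tangent C y h = inner_so_tangent C y h \<and>
      (\<forall>t::nat \<Rightarrow> real. \<forall>r::nat \<Rightarrow> 'a.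
         (\<forall>k. 0 < t k) \<and> t \<longlonglongrightarrow> 0 \<and> (\<lambda>k. t k *\<^sub>R r k) \<longlonglongrightarrow> 0 \<and>
         (\<forall>k. y + t k *\<^sub>R h + ((t k)\<^sup>2 / 2) *\<^sub>R r k \<in> C) \<longrightarrow>
         (\<forall>\<epsilon>>0. \<forall>\<^sub>F k in sequentially. \<exists>w \<in> outer_so_tangent C y h. dist (r k) w < \<epsilon>)))"

definition so_regular :: "'a::real_normed_vector set \<Rightarrow> bool" where
  "so_regular C \<longleftrightarrow> (\<forall>y \<in> C. so_regular_at C y)"

(* support function, extended-real valued (sup of the empty set = -infinity) *)
definition support_fun :: "'a::real_inner \<Rightarrow> 'a set \<Rightarrow> ereal" where
  "support_fun u T = (SUP w\<in>T. ereal (u \<bullet> w))"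

definition twice_differentiable :: "('a::euclidean_space \<Rightarrow> 'b::real_normed_vector) \<Rightarrow> bool" where
  "twice_differentiable f \<longleftrightarrow> (\<forall>x. f differentiable (at x)) \<and>
     (\<forall>x. (\<lambda>z. Blinfun (frechet_derivative f (at z))) differentiable (at x))"

definition hess_quad :: "('a::euclidean_space \<Rightarrow> real) \<Rightarrow> 'a \<Rightarrow> 'a \<Rightarrow> real" where
  "hess_quad f x d =
     blinfun_apply (frechet_derivative (\<lambda>z. Blinfun (frechet_derivative f (at z))) (at x) d) d"

definition Ups :: "('x \<Rightarrow> 'y) \<Rightarrow> ('x \<Rightarrow> real^'n^'n) \<Rightarrow> ('x \<Rightarrow> real^'n^'n)
     \<Rightarrow> 'x \<Rightarrow> 'y \<times> ((real^'n^'n) \<times> (real^'n^'n))" where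
  "Ups h \<theta> \<zeta> x = (h x, (\<theta> x, \<zeta> x))"

definition mult_space :: "('y \<times> ((real^'n^'n) \<times> (real^'n^'n))) set" where
  "mult_space = UNIV \<times> (sym_mats \<times> sym_mats)"

definition Lag :: "('x \<Rightarrow> real) \<Rightarrow> ('x \<Rightarrow> 'y::real_inner) \<Rightarrow> ('x \<Rightarrow> real^'n^'n) \<Rightarrow> ('x \<Rightarrow> real^'n^'n)
     \<Rightarrow> 'x \<Rightarrow> 'y \<times> ((real^'n^'n) \<times> (real^'n^'n)) \<Rightarrow> real" where
  "Lag \<phi> h \<theta> \<zeta> x \<mu> = \<phi> x + fst \<mu> \<bullet> h x + snd \<mu> \<bullet> (\<theta> x, \<zeta> x)"

end

theory Submission
  imports Defs
begin

(*
  Under the qualification condition the constraint system is metrically subregular at xs: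
  otherwise an Ekeland-type penalization yields points where a unit regular normal almost
  annihilates the derivative of \<Upsilon>, and a limit of these normals is a nonzero limiting normal in
  the kernel of the adjoint.  Together with local Lipschitz continuity of \<phi>, subregularity makes
  xs a local minimizer of the exact penalty \<phi> + c dist(\<Upsilon>(.), K \<times> \<Omega>).

  Directions orthogonal to the limiting normal cone N are Clarke tangent directions, so they can be
  added to tangent vectors and to outer second-order tangent vectors.  Hence \<phi>'(xs) vanishes on the
  preimage of the orthogonal complement of N, which yields a multiplier in the span of N.  It is
  unique by the qualification condition and it is a regular normal, so the regular, limiting and
  Clarke multiplier sets coincide.  For the second-order condition an outer second-order tangent
  vector is translated into the form \<Upsilon>'(xs) w + \<Upsilon>''(xs)(d, d); along the parabola
  xs + t d + t\<^sup>2/2 w, the exact penalty and a second-order Taylor expansion of the Lagrangian bound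
  the support function.
*)

section \<open>Tangent and normal cones\<close>

lemma power2_norm_add_scaleR:
  fixes a b :: "'a::real_inner"
  shows "(norm (a + c *\<^sub>R b))\<^sup>2 = (norm a)\<^sup>2 + 2 * c * (a \<bullet> b) + c\<^sup>2 * (norm b)\<^sup>2"
  by (simp only: power2_norm_eq_inner)
     (simp add: inner_add_left inner_add_right inner_commute power2_eq_square algebra_simps)

lemma nearest_points_exist:
  fixes a :: "'i \<Rightarrow> 'a::heine_borel"
  assumes "closed C" "C \<noteq> {}"
  obtains c where "\<And>k. c k \<in> C" "\<And>k. infdist (a k) C = dist (a k) (c k)"
proof -
  have "\<forall>k. \<exists>p. p \<in> C \<and> infdist (a k) C = dist (a k) p"
    using infdist_attains_inf[OF assms] by blast
  then have "\<exists>c. \<forall>k. c k \<in> C \<and> infdist (a k) C = dist (a k) (c k)"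
    by (rule choice)
  then obtain c where c: "\<forall>k. c k \<in> C \<and> infdist (a k) C = dist (a k) (c k)"
    by blast
  show ?thesis by (rule that[of c]) (use c in auto)
qed

lemma tendsto_of_dist_le:
  assumes "\<And>k. dist (p k) y \<le> b k" "b \<longlonglongrightarrow> 0"
  shows "p \<longlonglongrightarrow> y"
proof -
  have "(\<lambda>k. dist (p k) y) \<longlonglongrightarrow> 0"
    by (rule tendsto_sandwich[OF always_eventually always_eventually tendsto_const assms(2)])
       (use assms(1) in auto)
  then show ?thesis by (rule tendsto_dist_iff[THEN iffD2])
qed

lemma nearest_points_tendsto:
  assumes "y \<in> C" "a \<longlonglongrightarrow> y" "\<And>k. infdist (a k) C = dist (a k) (c k)"
  shows "c \<longlonglongrightarrow> y"
proof (rule tendsto_of_dist_le)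
  show "dist (c k) y \<le> 2 * dist (a k) y" for k
  proof -
    have "dist (a k) (c k) \<le> dist (a k) y" using assms(3)[of k] infdist_le[OF assms(1)] by metis
    then show ?thesis using dist_triangle[of "c k" y "a k"] dist_commute[of "c k" "a k"] by linarith
  qed
  show "(\<lambda>k. 2 * dist (a k) y) \<longlonglongrightarrow> 0"
    using tendsto_mult[OF tendsto_const tendsto_dist_iff[THEN iffD1, OF assms(2)], of 2] by simp
qed

lemma tangent_cone_seq_tendsto:
  fixes z :: "nat \<Rightarrow> 'a::real_normed_vector"
  assumes "\<forall>k. 0 < t k" "t \<longlonglongrightarrow> 0" "(\<lambda>k. (1 / t k) *\<^sub>R (z k - y)) \<longlonglongrightarrow> v"
  shows "z \<longlonglongrightarrow> y"
proof -
  have "t k *\<^sub>R ((1 / t k) *\<^sub>R (z k - y)) = z k - y" for k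
  proof -
    have "t k \<noteq> 0" using assms(1) by (metis less_irrefl)
    then show ?thesis by simp
  qed
  then have "(\<lambda>k. z k - y) \<longlonglongrightarrow> 0 *\<^sub>R v"
    using tendsto_scaleR[OF assms(2,3)] by simp
  then show ?thesis by (simp add: LIM_zero_iff)
qed

lemma zero_in_tangent_cone: "y \<in> C \<Longrightarrow> 0 \<in> tangent_cone C y"
  unfolding tangent_cone_def using LIMSEQ_inverse_real_of_nat
  by (intro CollectI exI[of _ "\<lambda>k. inverse (real (Suc k))"] exI[of _ "\<lambda>k. y"]) auto

lemma tangent_cone_subset_subspace:
  fixes C :: "'a::euclidean_space set"
  assumes "C \<subseteq> E" "subspace E" "y \<in> C"
  shows "tangent_cone C y \<subseteq> E"
proof
  fix v assume "v \<in> tangent_cone C y"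
  then obtain t z where z: "\<forall>k. z k \<in> C" and lim: "(\<lambda>k. (1 / t k) *\<^sub>R (z k - y)) \<longlonglongrightarrow> v"
    unfolding tangent_cone_def by blast
  have "(1 / t k) *\<^sub>R (z k - y) \<in> E" for k
    using assms z by (intro subspace_scale subspace_diff) auto
  then show "v \<in> E" using closed_sequentially[OF closed_subspace[OF assms(2)] _ lim] by blast
qed

lemma outer_so_tangent_subset_subspace:
  fixes C :: "'a::euclidean_space set"
  assumes "C \<subseteq> E" "subspace E" "y \<in> C" "v \<in> E" "closed C"
  shows "outer_so_tangent C y v \<subseteq> E"
proof
  fix z assume "z \<in> outer_so_tangent C y v"
  then obtain t where t: "\<forall>k. 0 < t k"
    and lim: "(\<lambda>k. infdist (y + t k *\<^sub>R v + ((t k)\<^sup>2 / 2) *\<^sub>R z) C / (t k)\<^sup>2) \<longlonglongrightarrow> 0"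
    unfolding outer_so_tangent_def by blast
  define a where "a k = y + t k *\<^sub>R v + ((t k)\<^sup>2 / 2) *\<^sub>R z" for k
  have "C \<noteq> {}" using assms(3) by auto
  then obtain c where c: "\<And>k. c k \<in> C" "\<And>k. infdist (a k) C = dist (a k) (c k)"
    using nearest_points_exist[OF assms(5), where a = a] by blast
  define w where "w k = (2 / (t k)\<^sup>2) *\<^sub>R (c k - y - t k *\<^sub>R v)" for k
  have "w k \<in> E" for k
    using assms c(1) unfolding w_def by (intro subspace_scale subspace_diff) auto
  moreover have "w \<longlonglongrightarrow> z"
  proof (rule tendsto_of_dist_le)
    show "dist (w k) z \<le> 2 * (infdist (a k) C / (t k)\<^sup>2)" for k
    proof -
      have "w k - z = (2 / (t k)\<^sup>2) *\<^sub>R (c k - a k)"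
        using t[rule_format, of k] by (simp add: w_def a_def algebra_simps)
      then show ?thesis using c(2)[of k] by (simp add: dist_norm norm_minus_commute)
    qed
    show "(\<lambda>k. 2 * (infdist (a k) C / (t k)\<^sup>2)) \<longlonglongrightarrow> 0"
      using tendsto_mult[OF tendsto_const lim, of 2] by (simp add: a_def)
  qed
  ultimately show "z \<in> E" using closed_sequentially[OF closed_subspace[OF assms(2)]] by blast
qed

lemma proximal_normal:
  fixes C :: "'a::euclidean_space set"
  assumes p: "p \<in> C" and near: "infdist z C = dist z p" and "z - p \<in> E"
  shows "z - p \<in> reg_normal_cone E C p"
  unfolding reg_normal_cone_def
proof (intro CollectI conjI ballI \<open>z - p \<in> E\<close>)
  fix w assume "w \<in> tangent_cone C p"
  then obtain t c where t: "\<forall>k. 0 < t k" "t \<longlonglongrightarrow> 0" and c: "\<forall>k. c k \<in> C"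
    and lim: "(\<lambda>k. (1 / t k) *\<^sub>R (c k - p)) \<longlonglongrightarrow> w"
    unfolding tangent_cone_def by blast
  define q where "q k = (1 / t k) *\<^sub>R (c k - p)" for k
  have ineq: "2 * ((z - p) \<bullet> q k) \<le> t k * (norm (q k))\<^sup>2" for k
  proof -
    have tk: "t k > 0" using t(1) by auto
    have "(dist z p)\<^sup>2 \<le> (dist z (c k))\<^sup>2"
      using near infdist_le[of "c k" C z] c by (simp add: power_mono)
    also have "c k = p + t k *\<^sub>R q k" using tk by (simp add: q_def)
    then have "(dist z (c k))\<^sup>2 = (norm ((z - p) + (- t k) *\<^sub>R q k))\<^sup>2"
      by (simp add: dist_norm algebra_simps)
    also have "\<dots> = (norm (z - p))\<^sup>2 - 2 * t k * ((z - p) \<bullet> q k) + (t k)\<^sup>2 * (norm (q k))\<^sup>2"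
      unfolding power2_norm_add_scaleR by simp
    finally have "t k * (2 * ((z - p) \<bullet> q k)) \<le> t k * (t k * (norm (q k))\<^sup>2)"
      by (simp add: dist_norm power2_eq_square algebra_simps)
    then show ?thesis using tk by simp
  qed
  have l1: "(\<lambda>k. 2 * ((z - p) \<bullet> q k)) \<longlonglongrightarrow> 2 * ((z - p) \<bullet> w)"
    using lim unfolding q_def[symmetric] by (intro tendsto_intros)
  have l2: "(\<lambda>k. t k * (norm (q k))\<^sup>2) \<longlonglongrightarrow> 0 * (norm w)\<^sup>2"
    using lim t(2) unfolding q_def[symmetric] by (intro tendsto_intros)
  have "2 * ((z - p) \<bullet> w) \<le> 0 * (norm w)\<^sup>2"
    using LIMSEQ_le[OF l1 l2] ineq by blast
  then show "(z - p) \<bullet> w \<le> 0" by simp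
qed

lemma reg_normal_cone_scaleR:
  assumes "u \<in> reg_normal_cone E C p" "subspace E" "0 \<le> c"
  shows "c *\<^sub>R u \<in> reg_normal_cone E C p"
  using assms unfolding reg_normal_cone_def
  by (auto intro: subspace_scale mult_nonneg_nonpos)

lemma unit_reg_normals_converge_to_lim_normal:
  fixes C :: "'a::euclidean_space set"
  assumes "\<And>k. c k \<in> C" "c \<longlonglongrightarrow> y" "\<And>k. n k \<in> reg_normal_cone E C (c k)"
    and "\<And>k. norm (n k) = 1"
  obtains \<nu> r where "\<nu> \<in> lim_normal_cone E C y" "norm \<nu> = 1" "strict_mono r" "(n \<circ> r) \<longlonglongrightarrow> \<nu>"
proof -
  obtain \<nu> r where \<nu>: "\<nu> \<in> sphere 0 1" "strict_mono r" "(n \<circ> r) \<longlonglongrightarrow> \<nu>"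
  proof -
    have "\<forall>k. n k \<in> sphere 0 1" using assms(4) by simp
    then show ?thesis
      using compact_imp_seq_compact[OF compact_sphere, of 0 1] that unfolding seq_compact_def by blast
  qed
  have "\<nu> \<in> lim_normal_cone E C y"
    unfolding lim_normal_cone_def
    using assms \<nu> LIMSEQ_subseq_LIMSEQ[OF assms(2) \<nu>(2)]
    by (intro CollectI exI[of _ "c \<circ> r"] exI[of _ "n \<circ> r"]) auto
  with \<nu> that show ?thesis by simp
qed

lemma reg_normal_cone_subset_lim_normal_cone:
  "y \<in> C \<Longrightarrow> reg_normal_cone E C y \<subseteq> lim_normal_cone E C y"
  unfolding lim_normal_cone_def
  by (auto intro!: exI[of _ "\<lambda>k. y"] exI[of _ "\<lambda>k. v" for v])

lemma lim_normal_cone_subset_clarke_normal_cone: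
  "lim_normal_cone E C y \<subseteq> clarke_normal_cone E C y"
  unfolding clarke_normal_cone_def by (meson closure_subset hull_subset order_trans)

lemma clarke_normal_cone_subset_span:
  fixes C :: "'a::euclidean_space set"
  shows "clarke_normal_cone E C y \<subseteq> span (lim_normal_cone E C y)"
  unfolding clarke_normal_cone_def
  by (intro closure_minimal hull_minimal span_superset subspace_imp_convex subspace_span
      closed_subspace)

lemma lim_normal_cone_subset_subspace:
  fixes C :: "'a::euclidean_space set"
  assumes "subspace E"
  shows "lim_normal_cone E C y \<subseteq> E"
proof
  fix v assume "v \<in> lim_normal_cone E C y"
  then obtain yk vk where vk: "\<forall>k. vk k \<in> reg_normal_cone E C (yk k)" "vk \<longlonglongrightarrow> v"
    unfolding lim_normal_cone_def by blast
  have "vk k \<in> E" for k using vk(1) by (simp add: reg_normal_cone_def)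
  then show "v \<in> E" by (rule closed_sequentially[OF closed_subspace[OF assms] _ vk(2)])
qed

section \<open>Directions orthogonal to the limiting normal cone\<close>

lemma regular_normals_almost_orthogonal:
  fixes C :: "'a::euclidean_space set"
  assumes E: "subspace E" and perp: "\<forall>u \<in> lim_normal_cone E C y. l \<bullet> u = 0" and e: "e > 0"
  shows "\<exists>\<delta>>0. \<forall>p\<in>C. dist p y < \<delta> \<longrightarrow> (\<forall>u \<in> reg_normal_cone E C p. u \<bullet> l \<le> e * norm u)"
proof (rule ccontr)
  assume "\<not> ?thesis"
  then have "\<exists>p u. p \<in> C \<and> dist p y < inverse (real (Suc k)) \<and> u \<in> reg_normal_cone E C p
      \<and> e * norm u < u \<bullet> l" for k
    by (metis not_le inverse_positive_iff_positive of_nat_0_less_iff zero_less_Suc)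
  then obtain p u where p: "\<And>k. p k \<in> C" "\<And>k. dist (p k) y < inverse (real (Suc k))"
    and u: "\<And>k. u k \<in> reg_normal_cone E C (p k)" "\<And>k. e * norm (u k) < u k \<bullet> l"
    by metis
  have "u k \<noteq> 0" for k using u(2)[of k] by auto
  define n where "n k = (1 / norm (u k)) *\<^sub>R u k" for k
  have n1: "norm (n k) = 1" for k using \<open>u k \<noteq> 0\<close> by (simp add: n_def)
  have nN: "n k \<in> reg_normal_cone E C (p k)" for k
    unfolding n_def by (rule reg_normal_cone_scaleR[OF u(1) E]) simp
  have nl: "e < n k \<bullet> l" for k
    using u(2)[of k] \<open>u k \<noteq> 0\<close> by (simp add: n_def pos_less_divide_eq mult.commute)
  have "p \<longlonglongrightarrow> y"
    by (rule tendsto_of_dist_le[OF less_imp_le[OF p(2)] LIMSEQ_inverse_real_of_nat])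
  then obtain \<nu> r where \<nu>: "\<nu> \<in> lim_normal_cone E C y" "strict_mono r" "(n \<circ> r) \<longlonglongrightarrow> \<nu>"
    by (rule unit_reg_normals_converge_to_lim_normal[OF p(1) _ nN n1])
  have "(\<lambda>k. (n \<circ> r) k \<bullet> l) \<longlonglongrightarrow> \<nu> \<bullet> l" using \<nu>(3) by (intro tendsto_intros)
  then have "e \<le> \<nu> \<bullet> l" using nl by (intro LIMSEQ_le_const) (auto intro: less_imp_le)
  with perp \<nu>(1) e show False by (simp add: inner_commute)
qed

text \<open>The second-order terms \<open>h\<^sup>2 m\<^sup>2\<close> of the increments only add up in squares: after \<open>j\<close> steps
  they contribute \<open>sqrt j * h * m\<close>, which is negligible against the length \<open>j * h\<close> of the grid.\<close>

lemma sq_sqrt_step_le: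
  fixes P \<mu> n :: real
  assumes "0 \<le> P" "0 \<le> \<mu>" "0 \<le> n"
  shows "(P + sqrt n * \<mu>)\<^sup>2 + \<mu>\<^sup>2 \<le> (P + sqrt (n + 1) * \<mu>)\<^sup>2"
proof -
  have "sqrt n \<le> sqrt (n + 1)" by simp
  then have "2 * P * \<mu> * sqrt n \<le> 2 * P * \<mu> * sqrt (n + 1)"
    using assms by (intro mult_left_mono) simp_all
  moreover have "(P + sqrt n * \<mu>)\<^sup>2 + \<mu>\<^sup>2 = P\<^sup>2 + 2 * P * \<mu> * sqrt n + ((sqrt n)\<^sup>2 + 1) * \<mu>\<^sup>2"
    "(P + sqrt (n + 1) * \<mu>)\<^sup>2 = P\<^sup>2 + 2 * P * \<mu> * sqrt (n + 1) + (sqrt (n + 1))\<^sup>2 * \<mu>\<^sup>2"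
    by (simp_all add: power2_eq_square algebra_simps)
  moreover have "(sqrt n)\<^sup>2 + 1 = (sqrt (n + 1))\<^sup>2" using assms(3) by simp
  ultimately show ?thesis by simp
qed

lemma sq_increment_grid_bound:
  fixes f :: "real \<Rightarrow> real"
  assumes f0: "f 0 = 0" and nonneg: "\<And>\<sigma>. 0 \<le> f \<sigma>" and e: "0 \<le> e" and m: "0 \<le> m" and h: "0 \<le> h"
    and step: "\<And>\<sigma>. 0 \<le> \<sigma> \<Longrightarrow> \<sigma> \<le> s \<Longrightarrow> (f (\<sigma> + h))\<^sup>2 \<le> (f \<sigma>)\<^sup>2 + 2 * h * e * f \<sigma> + h\<^sup>2 * m\<^sup>2"
  shows "real j * h \<le> s \<Longrightarrow> f (real j * h) \<le> real j * h * e + sqrt (real j) * (h * m)"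
proof (induction j)
  case 0
  show ?case using f0 by simp
next
  case (Suc j)
  define a where "a = f (real j * h)"
  define P where "P = real (Suc j) * h * e"
  have js: "real j * h \<le> s" using Suc.prems h by (simp add: algebra_simps)
  have "0 \<le> P" "0 \<le> h * m" using e h m by (simp_all add: P_def)
  have "real (Suc j) * h = real j * h + h" by (simp add: algebra_simps)
  then have "(f (real (Suc j) * h))\<^sup>2 \<le> a\<^sup>2 + 2 * h * e * a + h\<^sup>2 * m\<^sup>2"
    using step[OF _ js] h by (simp add: a_def)
  also have "\<dots> \<le> (a + h * e)\<^sup>2 + (h * m)\<^sup>2"
    using e h by (simp add: power2_eq_square algebra_simps)
  also have "\<dots> \<le> (P + sqrt (real j) * (h * m))\<^sup>2 + (h * m)\<^sup>2"
  proof -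
    have "a + h * e \<le> P + sqrt (real j) * (h * m)"
      using Suc.IH[OF js] by (simp add: a_def P_def distrib_right)
    moreover have "0 \<le> a + h * e" using nonneg[of "real j * h"] e h by (simp add: a_def)
    ultimately show ?thesis by (simp add: power_mono)
  qed
  also have "\<dots> \<le> (P + sqrt (real (Suc j)) * (h * m))\<^sup>2"
    using sq_sqrt_step_le[OF \<open>0 \<le> P\<close> \<open>0 \<le> h * m\<close>, of "real j"] by (simp add: add.commute)
  finally have "f (real (Suc j) * h) \<le> P + sqrt (real (Suc j)) * (h * m)"
    by (rule power2_le_imp_le) (use \<open>0 \<le> P\<close> \<open>0 \<le> h * m\<close> in simp)
  then show ?case by (simp add: P_def)
qed

lemma sq_increment_linear_bound:
  fixes f :: "real \<Rightarrow> real"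
  assumes f0: "f 0 = 0" and nonneg: "\<And>\<sigma>. 0 \<le> f \<sigma>" and e: "0 \<le> e" and s: "0 \<le> s"
    and step: "\<And>\<sigma> h. 0 \<le> \<sigma> \<Longrightarrow> \<sigma> \<le> s \<Longrightarrow> 0 \<le> h \<Longrightarrow>
      (f (\<sigma> + h))\<^sup>2 \<le> (f \<sigma>)\<^sup>2 + 2 * h * e * f \<sigma> + h\<^sup>2 * m\<^sup>2"
  shows "f s \<le> e * s"
proof -
  have step': "(f (\<sigma> + h))\<^sup>2 \<le> (f \<sigma>)\<^sup>2 + 2 * h * e * f \<sigma> + h\<^sup>2 * \<bar>m\<bar>\<^sup>2"
    if "0 \<le> \<sigma>" "\<sigma> \<le> s" "0 \<le> h" for \<sigma> h
    using step[OF that] by simp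
  have bound: "f s \<le> s * e + s * \<bar>m\<bar> * sqrt (inverse (real (Suc N)))" for N
  proof -
    define h where "h = s / real (Suc N)"
    have Nh: "real (Suc N) * h = s" and h0: "0 \<le> h" using s by (simp_all add: h_def)
    have "f (real (Suc N) * h) \<le> real (Suc N) * h * e + sqrt (real (Suc N)) * (h * \<bar>m\<bar>)"
      using sq_increment_grid_bound[OF f0 nonneg e abs_ge_zero h0 step'[OF _ _ h0]] Nh
      by (metis order_refl)
    moreover have "sqrt (real (Suc N)) * (h * \<bar>m\<bar>) = s * \<bar>m\<bar> * sqrt (inverse (real (Suc N)))"
    proof -
      define r where "r = sqrt (real (Suc N))"
      have "real (Suc N) = r * r" "r > 0" by (simp_all add: r_def)
      then have "r * (h * \<bar>m\<bar>) = s * \<bar>m\<bar> * inverse r" by (simp add: h_def field_simps)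
      then show ?thesis by (simp add: r_def real_sqrt_inverse)
    qed
    ultimately show ?thesis unfolding Nh by linarith
  qed
  have "(\<lambda>N. s * e + s * \<bar>m\<bar> * sqrt (inverse (real (Suc N)))) \<longlonglongrightarrow> s * e + s * \<bar>m\<bar> * 0"
    using tendsto_real_sqrt[OF LIMSEQ_inverse_real_of_nat] by (intro tendsto_intros) simp_all
  then have "f s \<le> s * e + s * \<bar>m\<bar> * 0"
    using bound by (intro LIMSEQ_le_const) auto
  then show ?thesis by (simp add: mult.commute)
qed

lemma infdist_translate_sq_le:
  assumes "p \<in> C" "infdist z C = dist z p" "(z - p) \<bullet> l \<le> e * dist z p" "0 \<le> h"
  shows "(infdist (z + h *\<^sub>R l) C)\<^sup>2 \<le> (infdist z C)\<^sup>2 + 2 * h * e * infdist z C + h\<^sup>2 * (norm l)\<^sup>2"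
proof -
  have "infdist (z + h *\<^sub>R l) C \<le> norm ((z - p) + h *\<^sub>R l)"
    using infdist_le[OF assms(1)] by (simp add: dist_norm algebra_simps)
  then have "(infdist (z + h *\<^sub>R l) C)\<^sup>2 \<le> (norm ((z - p) + h *\<^sub>R l))\<^sup>2"
    by (simp add: power_mono infdist_nonneg)
  also have "\<dots> = (norm (z - p))\<^sup>2 + 2 * h * ((z - p) \<bullet> l) + h\<^sup>2 * (norm l)\<^sup>2"
    by (rule power2_norm_add_scaleR)
  also have "\<dots> \<le> (norm (z - p))\<^sup>2 + 2 * h * (e * dist z p) + h\<^sup>2 * (norm l)\<^sup>2"
    using assms(3,4) by (simp add: mult_left_mono)
  finally show ?thesis using assms(2) by (simp add: dist_norm algebra_simps)
qed

lemma infdist_translate_perp_le: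
  fixes C :: "'a::euclidean_space set"
  assumes C: "closed C" "C \<subseteq> E" and E: "subspace E" and y: "y \<in> C" and l: "l \<in> E"
    and perp: "\<forall>u \<in> lim_normal_cone E C y. l \<bullet> u = 0" and e: "e > 0"
  shows "\<exists>\<delta>>0. \<forall>c\<in>C. dist c y < \<delta> \<longrightarrow> (\<forall>s. 0 \<le> s \<and> s < \<delta> \<longrightarrow> infdist (c + s *\<^sub>R l) C \<le> e * s)"
proof -
  obtain \<delta>\<^sub>0 where \<delta>\<^sub>0: "\<delta>\<^sub>0 > 0"
    "\<forall>p\<in>C. dist p y < \<delta>\<^sub>0 \<longrightarrow> (\<forall>u\<in>reg_normal_cone E C p. u \<bullet> l \<le> e * norm u)"
    using regular_normals_almost_orthogonal[OF E perp e] by blast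
  define \<delta> where "\<delta> = \<delta>\<^sub>0 / (1 + 2 * norm l)"
  have pos: "1 + 2 * norm l > 0" by (simp add: add_pos_nonneg)
  then have "\<delta> > 0" "\<delta> * (1 + 2 * norm l) = \<delta>\<^sub>0"
    using \<delta>\<^sub>0(1) by (simp_all add: \<delta>_def)
  then have "\<delta> + 2 * (\<delta> * norm l) = \<delta>\<^sub>0" by (simp add: algebra_simps)
  show ?thesis
  proof (intro exI[of _ \<delta>] conjI \<open>\<delta> > 0\<close> ballI impI allI)
    fix c s assume c: "c \<in> C" "dist c y < \<delta>" and s: "0 \<le> s \<and> s < \<delta>"
    define f where "f \<sigma> = infdist (c + \<sigma> *\<^sub>R l) C" for \<sigma>
    have "f s \<le> e * s"
    proof (rule sq_increment_linear_bound)
      fix \<sigma> h :: real assume \<sigma>: "0 \<le> \<sigma>" "\<sigma> \<le> s" and h: "0 \<le> h"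
      define z where "z = c + \<sigma> *\<^sub>R l"
      obtain p where p: "p \<in> C" "infdist z C = dist z p"
        using infdist_attains_inf[OF C(1)] y by blast
      have "z \<in> E" using c C(2) l E by (auto simp: z_def intro: subspace_add subspace_scale)
      then have normal: "z - p \<in> reg_normal_cone E C p"
        using p C(2) by (intro proximal_normal subspace_diff[OF E]) auto
      have "dist z c \<le> \<delta> * norm l"
        using \<sigma> s by (simp add: z_def dist_norm mult_right_mono)
      moreover have "dist z p \<le> dist z c" using p(2) infdist_le[OF c(1), of z] by simp
      moreover have "dist p y \<le> dist z p + dist z c + dist c y"
        using dist_triangle[of p y z] dist_triangle[of z y c] by (simp add: dist_commute)
      ultimately have "dist p y < \<delta>\<^sub>0"
        using c(2) \<open>\<delta> + 2 * (\<delta> * norm l) = \<delta>\<^sub>0\<close> by linarith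
      then have "(z - p) \<bullet> l \<le> e * dist z p"
        using \<delta>\<^sub>0(2) p(1) normal by (simp add: dist_norm)
      from infdist_translate_sq_le[OF p this h]
      show "(f (\<sigma> + h))\<^sup>2 \<le> (f \<sigma>)\<^sup>2 + 2 * h * e * f \<sigma> + h\<^sup>2 * (norm l)\<^sup>2"
        by (simp add: f_def z_def scaleR_add_left add.assoc)
    qed (use c e s in \<open>simp_all add: f_def infdist_nonneg\<close>)
    then show "infdist (c + s *\<^sub>R l) C \<le> e * s" by (simp add: f_def)
  qed
qed

lemma infdist_translate_perp_seq:
  fixes C :: "'a::euclidean_space set"
  assumes C: "closed C" "C \<subseteq> E" and E: "subspace E" and y: "y \<in> C" and l: "l \<in> E"
    and perp: "\<forall>u \<in> lim_normal_cone E C y. l \<bullet> u = 0"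
    and c: "\<And>k. c k \<in> C" "c \<longlonglongrightarrow> y" and s: "\<And>k. 0 < s k" "s \<longlonglongrightarrow> 0"
  shows "(\<lambda>k. infdist (c k + s k *\<^sub>R l) C / s k) \<longlonglongrightarrow> 0"
proof (rule tendstoI)
  fix e :: real assume "e > 0"
  then obtain \<delta> where \<delta>: "\<delta> > 0"
    "\<forall>c\<in>C. dist c y < \<delta> \<longrightarrow> (\<forall>s. 0 \<le> s \<and> s < \<delta> \<longrightarrow> infdist (c + s *\<^sub>R l) C \<le> e / 2 * s)"
    using infdist_translate_perp_le[OF C E y l perp, of "e / 2"] by auto
  have "eventually (\<lambda>k. dist (c k) y < \<delta>) sequentially" by (rule tendstoD[OF c(2) \<delta>(1)])
  moreover have "eventually (\<lambda>k. dist (s k) 0 < \<delta>) sequentially" by (rule tendstoD[OF s(2) \<delta>(1)])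
  ultimately have "eventually (\<lambda>k. dist (c k) y < \<delta> \<and> s k < \<delta>) sequentially"
    by eventually_elim auto
  then show "eventually (\<lambda>k. dist (infdist (c k + s k *\<^sub>R l) C / s k) 0 < e) sequentially"
  proof (rule eventually_mono)
    fix k assume "dist (c k) y < \<delta> \<and> s k < \<delta>"
    then have "infdist (c k + s k *\<^sub>R l) C \<le> e / 2 * s k"
      using \<delta>(2) c(1) s(1)[of k] by (simp add: less_imp_le)
    then show "dist (infdist (c k + s k *\<^sub>R l) C / s k) 0 < e"
      using mult_pos_pos[OF \<open>e > 0\<close> s(1)[of k]] s(1)[of k]
      by (simp add: infdist_nonneg divide_less_eq)
  qed
qed

lemma tangent_cone_translate_perp:
  fixes C :: "'a::euclidean_space set"
  assumes C: "closed C" "C \<subseteq> E" and E: "subspace E" and y: "y \<in> C" and l: "l \<in> E"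
    and perp: "\<forall>u \<in> lim_normal_cone E C y. l \<bullet> u = 0" and v: "v \<in> tangent_cone C y"
  shows "v + l \<in> tangent_cone C y"
proof -
  obtain t z where t: "\<forall>k. 0 < t k" "t \<longlonglongrightarrow> 0" and z: "\<forall>k. z k \<in> C"
    and lim: "(\<lambda>k. (1 / t k) *\<^sub>R (z k - y)) \<longlonglongrightarrow> v"
    using v unfolding tangent_cone_def by blast
  obtain c where c: "\<And>k. c k \<in> C" "\<And>k. infdist (z k + t k *\<^sub>R l) C = dist (z k + t k *\<^sub>R l) (c k)"
    using nearest_points_exist[OF C(1), where a = "\<lambda>k. z k + t k *\<^sub>R l"] y by blast
  have small: "(\<lambda>k. (1 / t k) *\<^sub>R (c k - (z k + t k *\<^sub>R l))) \<longlonglongrightarrow> 0"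
  proof (rule tendsto_norm_zero_cancel)
    have "(\<lambda>k. infdist (z k + t k *\<^sub>R l) C / t k) \<longlonglongrightarrow> 0"
      by (rule infdist_translate_perp_seq[OF C E y l perp z[rule_format]
            tangent_cone_seq_tendsto[OF t lim] t(1)[rule_format] t(2)])
    then show "(\<lambda>k. norm ((1 / t k) *\<^sub>R (c k - (z k + t k *\<^sub>R l)))) \<longlonglongrightarrow> 0"
      by (simp add: c(2) dist_norm norm_minus_commute abs_of_pos[OF t(1)[rule_format]])
  qed
  have "(1 / t k) *\<^sub>R (c k - y)
      = (1 / t k) *\<^sub>R (z k - y) + l + (1 / t k) *\<^sub>R (c k - (z k + t k *\<^sub>R l))" for k
  proof -
    have "t k \<noteq> 0" using t(1) by (metis less_irrefl)
    then show ?thesis by (simp add: algebra_simps)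
  qed
  moreover have "(\<lambda>k. (1 / t k) *\<^sub>R (z k - y) + l + (1 / t k) *\<^sub>R (c k - (z k + t k *\<^sub>R l)))
      \<longlonglongrightarrow> v + l + 0"
    by (intro tendsto_intros lim small)
  ultimately have "(\<lambda>k. (1 / t k) *\<^sub>R (c k - y)) \<longlonglongrightarrow> v + l" by simp
  then show ?thesis
    unfolding tangent_cone_def using t c(1) by (intro CollectI exI[of _ t] exI[of _ c]) auto
qed

lemma outer_so_tangent_translate_perp:
  fixes C :: "'a::euclidean_space set"
  assumes C: "closed C" "C \<subseteq> E" and E: "subspace E" and y: "y \<in> C" and l: "l \<in> E"
    and perp: "\<forall>u \<in> lim_normal_cone E C y. l \<bullet> u = 0" and w: "w \<in> outer_so_tangent C y v"
  shows "w + l \<in> outer_so_tangent C y v"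
proof -
  obtain t where t: "\<forall>k. 0 < t k" "t \<longlonglongrightarrow> 0"
    and lim: "(\<lambda>k. infdist (y + t k *\<^sub>R v + ((t k)\<^sup>2 / 2) *\<^sub>R w) C / (t k)\<^sup>2) \<longlonglongrightarrow> 0"
    using w unfolding outer_so_tangent_def by blast
  define a where "a k = y + t k *\<^sub>R v + ((t k)\<^sup>2 / 2) *\<^sub>R w" for k
  define s where "s k = (t k)\<^sup>2 / 2" for k
  have "a \<longlonglongrightarrow> y + 0 *\<^sub>R v + ((0::real)\<^sup>2 / 2) *\<^sub>R w"
    unfolding a_def using t(2) by (intro tendsto_intros) simp_all
  then have "a \<longlonglongrightarrow> y" by simp
  obtain c where c: "\<And>k. c k \<in> C" "\<And>k. infdist (a k) C = dist (a k) (c k)"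
    using nearest_points_exist[OF C(1), where a = a] y by blast
  have "(\<lambda>k. (t k)\<^sup>2 / 2) \<longlonglongrightarrow> 0\<^sup>2 / 2" by (intro tendsto_intros t(2)) simp_all
  then have "s \<longlonglongrightarrow> 0" by (simp add: s_def[abs_def])
  moreover have "0 < s k" for k using t(1)[rule_format, of k] by (simp add: s_def)
  ultimately have s: "\<And>k. 0 < s k" "s \<longlonglongrightarrow> 0" by blast+
  have "(\<lambda>k. infdist (c k + s k *\<^sub>R l) C / s k) \<longlonglongrightarrow> 0"
    by (rule infdist_translate_perp_seq[OF C E y l perp c(1)
          nearest_points_tendsto[OF y \<open>a \<longlonglongrightarrow> y\<close> c(2)] s])
  moreover have "(\<lambda>k. infdist (a k) C / (t k)\<^sup>2) \<longlonglongrightarrow> 0" using lim by (simp add: a_def)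
  ultimately have sum: "(\<lambda>k. infdist (c k + s k *\<^sub>R l) C / s k / 2 + infdist (a k) C / (t k)\<^sup>2) \<longlonglongrightarrow> 0"
    using tendsto_add[OF tendsto_divide[OF _ tendsto_const]] by fastforce
  have le: "infdist (a k + s k *\<^sub>R l) C / (t k)\<^sup>2
      \<le> infdist (c k + s k *\<^sub>R l) C / s k / 2 + infdist (a k) C / (t k)\<^sup>2" for k
  proof -
    have "infdist (a k + s k *\<^sub>R l) C \<le> infdist (c k + s k *\<^sub>R l) C + infdist (a k) C"
      using infdist_triangle[of "a k + s k *\<^sub>R l" C "c k + s k *\<^sub>R l"] c(2)[of k]
      by (simp add: dist_norm)
    then show ?thesis
      using s(1)[of k] by (simp add: s_def add_divide_distrib[symmetric] divide_right_mono)
  qed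
  have "(\<lambda>k. infdist (a k + s k *\<^sub>R l) C / (t k)\<^sup>2) \<longlonglongrightarrow> 0"
    by (rule Lim_null_comparison[OF always_eventually sum])
       (use le in \<open>simp add: abs_of_nonneg[OF infdist_nonneg]\<close>)
  moreover have "a k + s k *\<^sub>R l = y + t k *\<^sub>R v + ((t k)\<^sup>2 / 2) *\<^sub>R (w + l)" for k
    by (simp add: a_def s_def algebra_simps)
  ultimately show ?thesis unfolding outer_so_tangent_def using t by (intro CollectI exI[of _ t]) auto
qed

section \<open>Twice differentiable maps\<close>

definition second_dir_deriv :: "('a::euclidean_space \<Rightarrow> 'b::real_normed_vector) \<Rightarrow> 'a \<Rightarrow> 'a \<Rightarrow> 'b" where
  "second_dir_deriv f x d =
     blinfun_apply (frechet_derivative (\<lambda>z. Blinfun (frechet_derivative f (at z))) (at x) d) d"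

lemma hess_quad_eq_second_dir_deriv: "hess_quad f x d = second_dir_deriv f x d"
  by (simp add: hess_quad_def second_dir_deriv_def)

lemma twice_differentiable_has_derivative:
  "twice_differentiable f \<Longrightarrow> (f has_derivative frechet_derivative f (at x)) (at x)"
  unfolding twice_differentiable_def using frechet_derivative_works by blast

lemma twice_differentiable_Blinfun_apply:
  "twice_differentiable f \<Longrightarrow>
    blinfun_apply (Blinfun (frechet_derivative f (at x))) = frechet_derivative f (at x)"
  using twice_differentiable_has_derivative bounded_linear_Blinfun_apply has_derivative_bounded_linear
  by blast

lemma twice_differentiable_isCont_derivative:
  fixes f :: "'a::euclidean_space \<Rightarrow> 'b::real_normed_vector"
  assumes "twice_differentiable f"
  shows "isCont (\<lambda>z. frechet_derivative f (at z) e) x"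
proof -
  have "isCont (\<lambda>z. Blinfun (frechet_derivative f (at z))) x"
    using assms unfolding twice_differentiable_def
    by (blast intro: differentiable_imp_continuous_within)
  then have "isCont (\<lambda>z. blinfun_apply (Blinfun (frechet_derivative f (at z))) e) x"
    by (intro continuous_intros)
  then show ?thesis using twice_differentiable_Blinfun_apply[OF assms] by simp
qed

lemma twice_differentiable_add:
  fixes f g :: "'a::euclidean_space \<Rightarrow> 'b::real_normed_vector"
  assumes f: "twice_differentiable f" and g: "twice_differentiable g"
  shows "twice_differentiable (\<lambda>z. f z + g z)"
proof -
  have "Blinfun (frechet_derivative (\<lambda>z. f z + g z) (at z))
      = Blinfun (frechet_derivative f (at z)) + Blinfun (frechet_derivative g (at z))" for z
  proof -
    have D: "((\<lambda>z. f z + g z) has_derivative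
        (\<lambda>v. frechet_derivative f (at z) v + frechet_derivative g (at z) v)) (at z)"
      by (intro has_derivative_add twice_differentiable_has_derivative f g)
    show ?thesis
      unfolding frechet_derivative_at[OF D, symmetric]
      by (rule blinfun_eqI)
         (simp add: plus_blinfun.rep_eq bounded_linear_Blinfun_apply has_derivative_bounded_linear[OF D]
           twice_differentiable_Blinfun_apply f g)
  qed
  then show ?thesis
    using f g unfolding twice_differentiable_def by (auto intro: differentiable_add)
qed

lemma twice_differentiable_bounded_linear_compose:
  fixes f :: "'a::euclidean_space \<Rightarrow> 'b::real_normed_vector" and b :: "'b \<Rightarrow> 'c::real_normed_vector"
  assumes f: "twice_differentiable f" and b: "bounded_linear b"
  shows "twice_differentiable (\<lambda>z. b (f z))"
proof -
  have D: "((\<lambda>z. b (f z)) has_derivative (\<lambda>v. b (frechet_derivative f (at z) v))) (at z)" for z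
    by (rule bounded_linear.has_derivative[OF b twice_differentiable_has_derivative[OF f]])
  have "Blinfun (frechet_derivative (\<lambda>z. b (f z)) (at z))
      = Blinfun b o\<^sub>L Blinfun (frechet_derivative f (at z))" for z
    unfolding frechet_derivative_at[OF D, symmetric]
    by (rule blinfun_eqI)
       (simp add: blinfun_compose.rep_eq bounded_linear_Blinfun_apply b has_derivative_bounded_linear[OF D]
         twice_differentiable_Blinfun_apply f)
  moreover have "(\<lambda>z. Blinfun b o\<^sub>L Blinfun (frechet_derivative f (at z))) differentiable (at x)" for x
  proof -
    obtain D where "((\<lambda>z. Blinfun (frechet_derivative f (at z))) has_derivative D) (at x)"
      using f unfolding twice_differentiable_def differentiable_def by blast
    from bounded_linear.has_derivative[OF
        bounded_bilinear.bounded_linear_right[OF bounded_bilinear_blinfun_compose] this]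
    show ?thesis unfolding differentiable_def by blast
  qed
  ultimately show ?thesis using D unfolding twice_differentiable_def differentiable_def by auto
qed

lemma has_derivative_dir_le:
  fixes f :: "'a::real_normed_vector \<Rightarrow> 'b::real_normed_vector"
  assumes der: "(f has_derivative f') (at x)" and e: "\<epsilon> > 0"
  shows "\<exists>\<delta>>0. \<forall>t. 0 < t \<and> t < \<delta> \<longrightarrow> norm (f (x + t *\<^sub>R d) - f x - t *\<^sub>R f' d) \<le> \<epsilon> * t"
proof -
  have ne: "norm d + 1 > 0" using norm_ge_zero[of d] by linarith
  obtain \<delta> where \<delta>: "\<delta> > 0" "\<forall>y. norm (y - x) < \<delta> \<longrightarrow>
      norm (f y - f x - f' (y - x)) \<le> \<epsilon> / (norm d + 1) * norm (y - x)"
    using der e ne unfolding has_derivative_at_alt by (metis divide_pos_pos)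
  show ?thesis
  proof (intro exI[of _ "\<delta> / (norm d + 1)"] conjI allI impI)
    show "\<delta> / (norm d + 1) > 0" using \<delta>(1) ne by simp
    fix t assume t: "0 < t \<and> t < \<delta> / (norm d + 1)"
    then have "t * (norm d + 1) < \<delta>" using ne by (simp add: pos_less_divide_eq)
    then have "t * norm d < \<delta>" using t by (simp add: distrib_left)
    then have "norm (f (x + t *\<^sub>R d) - f x - f' (t *\<^sub>R d)) \<le> \<epsilon> / (norm d + 1) * (t * norm d)"
      using \<delta>(2)[rule_format, of "x + t *\<^sub>R d"] t by simp
    also have "\<dots> = \<epsilon> * t * (norm d / (norm d + 1))" by simp
    also have "\<dots> \<le> \<epsilon> * t * 1"
      using e t ne by (intro mult_left_mono) auto
    finally show "norm (f (x + t *\<^sub>R d) - f x - t *\<^sub>R f' d) \<le> \<epsilon> * t"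
      by (simp add: linear_cmul[OF has_derivative_linear[OF der]])
  qed
qed

lemma has_derivative_dir_quotient_seq:
  fixes f :: "'a::real_normed_vector \<Rightarrow> 'b::real_normed_vector"
  assumes der: "(f has_derivative f') (at x)" and t: "\<And>k. 0 < t k" "t \<longlonglongrightarrow> 0"
  shows "(\<lambda>k. (1 / t k) *\<^sub>R (f (x + t k *\<^sub>R d) - f x)) \<longlonglongrightarrow> f' d"
proof (rule tendstoI)
  fix \<epsilon> :: real assume "\<epsilon> > 0"
  then obtain \<delta> where \<delta>: "\<delta> > 0"
    "\<forall>s. 0 < s \<and> s < \<delta> \<longrightarrow> norm (f (x + s *\<^sub>R d) - f x - s *\<^sub>R f' d) \<le> \<epsilon> / 2 * s"
    using has_derivative_dir_le[OF der, of "\<epsilon> / 2" d] by auto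
  have "eventually (\<lambda>k. dist (t k) 0 < \<delta>) sequentially" by (rule tendstoD[OF t(2) \<delta>(1)])
  then show "eventually (\<lambda>k. dist ((1 / t k) *\<^sub>R (f (x + t k *\<^sub>R d) - f x)) (f' d) < \<epsilon>) sequentially"
  proof eventually_elim
    case (elim k)
    have "(1 / t k) *\<^sub>R (f (x + t k *\<^sub>R d) - f x) - f' d
        = (1 / t k) *\<^sub>R (f (x + t k *\<^sub>R d) - f x - t k *\<^sub>R f' d)"
      using t(1)[of k] by (simp add: algebra_simps)
    moreover have "norm (f (x + t k *\<^sub>R d) - f x - t k *\<^sub>R f' d) \<le> \<epsilon> / 2 * t k"
      using \<delta>(2) t(1)[of k] elim by simp
    ultimately show ?case
      using mult_pos_pos[OF \<open>\<epsilon> > 0\<close> t(1)[of k]] t(1)[of k]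
      by (simp add: dist_norm pos_divide_less_eq)
  qed
qed

lemma has_derivative_in_closed_subspace:
  fixes f :: "'a::real_normed_vector \<Rightarrow> 'b::real_normed_vector"
  assumes der: "(f has_derivative f') (at x)" and S: "closed S" "subspace S" and fS: "\<And>z. f z \<in> S"
  shows "f' d \<in> S"
proof (rule closed_sequentially[OF S(1)])
  show "(\<lambda>k. (1 / inverse (real (Suc k))) *\<^sub>R (f (x + inverse (real (Suc k)) *\<^sub>R d) - f x)) \<longlonglongrightarrow> f' d"
    by (rule has_derivative_dir_quotient_seq[OF der _ LIMSEQ_inverse_real_of_nat]) simp
qed (use S(2) fS in \<open>auto intro: subspace_scale subspace_diff\<close>)

lemma second_dir_deriv_in_closed_subspace:
  fixes f :: "'a::euclidean_space \<Rightarrow> 'b::real_normed_vector"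
  assumes f: "twice_differentiable f" and S: "closed S" "subspace S" and fS: "\<And>z. f z \<in> S"
  shows "second_dir_deriv f x d \<in> S"
proof -
  let ?D = "\<lambda>z. Blinfun (frechet_derivative f (at z))"
  have "(?D has_derivative frechet_derivative ?D (at x)) (at x)"
    using f unfolding twice_differentiable_def frechet_derivative_works by blast
  then have "((\<lambda>z. blinfun_apply (?D z) d) has_derivative
      (\<lambda>h. blinfun_apply (frechet_derivative ?D (at x) h) d)) (at x)"
    by (rule bounded_linear.has_derivative[OF
        bounded_bilinear.bounded_linear_left[OF bounded_bilinear_blinfun_apply]])
  moreover have "blinfun_apply (?D z) d \<in> S" for z
    using has_derivative_in_closed_subspace[OF twice_differentiable_has_derivative[OF f] S fS]
    by (simp add: twice_differentiable_Blinfun_apply[OF f])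
  ultimately show ?thesis
    unfolding second_dir_deriv_def by (rule has_derivative_in_closed_subspace[OF _ S])
qed

lemma norm_le_of_derivative_bound:
  fixes r :: "real \<Rightarrow> 'b::real_normed_vector"
  assumes "\<And>s. s \<in> {0..t} \<Longrightarrow> norm (r' s) \<le> B"
    and "\<And>s. (r has_derivative (\<lambda>h. h *\<^sub>R r' s)) (at s within {0..t})"
    and "0 \<le> t" "r 0 = 0"
  shows "norm (r t) \<le> B * t"
proof -
  have "onorm (\<lambda>h. h *\<^sub>R r' s) = norm (r' s)" for s
    using onorm_scaleR_left[OF bounded_linear_ident, of "r' s"] onorm_id[where 'a=real] by simp
  then have "norm (r t - r 0) \<le> B * norm (t - 0)"
    using assms(1-3) by (intro differentiable_bound[of "{0..t}" r "\<lambda>s h. h *\<^sub>R r' s"]) auto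
  then show ?thesis using assms(3,4) by simp
qed

lemma derivative_along_parabola_le:
  fixes f :: "'a::euclidean_space \<Rightarrow> 'b::real_normed_vector"
  assumes f: "twice_differentiable f" and \<eta>: "\<eta> > 0"
  defines "D \<equiv> \<lambda>z. Blinfun (frechet_derivative f (at z))"
  shows "\<exists>\<delta>>0. \<forall>s. 0 < s \<and> s < \<delta> \<longrightarrow>
    norm (D (x + s *\<^sub>R d + (s\<^sup>2 / 2) *\<^sub>R w) - D x - s *\<^sub>R frechet_derivative D (at x) d) \<le> \<eta> * s"
proof -
  define p where "p s = x + s *\<^sub>R d + (s\<^sup>2 / 2) *\<^sub>R w" for s :: real
  have hD: "(D has_derivative frechet_derivative D (at x)) (at x)"
    using f unfolding twice_differentiable_def frechet_derivative_works D_def by simp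
  then have "(D has_derivative frechet_derivative D (at x)) (at (p 0))" by (simp add: p_def)
  moreover have "(p has_derivative (\<lambda>h. h *\<^sub>R d)) (at 0)"
    unfolding p_def by (auto intro!: derivative_eq_intros)
  ultimately have "((\<lambda>s. D (p s)) has_derivative (\<lambda>h. frechet_derivative D (at x) (h *\<^sub>R d))) (at 0)"
    by (rule has_derivative_compose[rotated])
  from has_derivative_dir_le[OF this \<eta>, of 1] show ?thesis
    by (simp add: p_def linear_cmul[OF has_derivative_linear[OF hD]])
qed

lemma parabola_remainder_has_derivative:
  fixes f :: "'a::euclidean_space \<Rightarrow> 'b::real_normed_vector"
  assumes f: "twice_differentiable f"
  defines "f' \<equiv> \<lambda>z. frechet_derivative f (at z)"
  shows "((\<lambda>s. f (x + s *\<^sub>R d + (s\<^sup>2 / 2) *\<^sub>R w) - f x - s *\<^sub>R f' x d - (s\<^sup>2 / 2) *\<^sub>R V) has_derivative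
      (\<lambda>h. h *\<^sub>R (f' (x + s *\<^sub>R d + (s\<^sup>2 / 2) *\<^sub>R w) (d + s *\<^sub>R w) - f' x d - s *\<^sub>R V))) (at s within S)"
proof -
  let ?p = "\<lambda>s. x + s *\<^sub>R d + (s\<^sup>2 / 2) *\<^sub>R w"
  have "(?p has_derivative (\<lambda>h. h *\<^sub>R (d + s *\<^sub>R w))) (at s within S)"
    by (auto intro!: derivative_eq_intros simp: algebra_simps power2_eq_square)
  then have fp: "((\<lambda>s. f (?p s)) has_derivative (\<lambda>h. f' (?p s) (h *\<^sub>R (d + s *\<^sub>R w)))) (at s within S)"
    unfolding f'_def by (rule has_derivative_compose[OF _ twice_differentiable_has_derivative[OF f]])
  have sq: "((\<lambda>s. (s\<^sup>2 / 2) *\<^sub>R V) has_derivative (\<lambda>h. (h * s) *\<^sub>R V)) (at s within S)"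
    by (auto intro!: derivative_eq_intros simp: algebra_simps power2_eq_square)
  have "((\<lambda>s. f (?p s) - f x - s *\<^sub>R f' x d - (s\<^sup>2 / 2) *\<^sub>R V) has_derivative
      (\<lambda>h. f' (?p s) (h *\<^sub>R (d + s *\<^sub>R w)) - 0 - h *\<^sub>R f' x d - (h * s) *\<^sub>R V)) (at s within S)"
    by (rule has_derivative_diff[OF has_derivative_diff[OF has_derivative_diff[OF fp has_derivative_const]
          has_derivative_scaleR_left[OF has_derivative_ident]] sq])
  moreover have "f' (?p s) (h *\<^sub>R (d + s *\<^sub>R w)) = h *\<^sub>R f' (?p s) (d + s *\<^sub>R w)" for h
    unfolding f'_def
    by (rule linear_cmul[OF has_derivative_linear[OF twice_differentiable_has_derivative[OF f]]])
  ultimately show ?thesis by (simp add: algebra_simps)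
qed

lemma parabola_remainder_derivative_le:
  fixes f :: "'a::euclidean_space \<Rightarrow> 'b::real_normed_vector"
  assumes f: "twice_differentiable f" and s: "0 \<le> s" "s \<le> 1"
  defines "f' \<equiv> \<lambda>z. frechet_derivative f (at z)"
    and "D \<equiv> \<lambda>z. Blinfun (frechet_derivative f (at z))"
  assumes near: "norm (D (x + s *\<^sub>R d + (s\<^sup>2 / 2) *\<^sub>R w) - D x - s *\<^sub>R frechet_derivative D (at x) d) \<le> \<eta> * s"
  shows "norm (f' (x + s *\<^sub>R d + (s\<^sup>2 / 2) *\<^sub>R w) (d + s *\<^sub>R w) - f' x d
      - s *\<^sub>R (f' x w + second_dir_deriv f x d))
    \<le> \<eta> * s * (norm d + norm w) + s\<^sup>2 * (norm (frechet_derivative D (at x) d) * norm w)"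
proof -
  define D2 where "D2 = frechet_derivative D (at x)"
  define R where "R = D (x + s *\<^sub>R d + (s\<^sup>2 / 2) *\<^sub>R w) - D x - s *\<^sub>R D2 d"
  have sdd: "second_dir_deriv f x d = blinfun_apply (D2 d) d"
    by (simp add: second_dir_deriv_def D2_def D_def)
  have Dapp: "f' z = blinfun_apply (D z)" for z
    unfolding D_def f'_def by (rule twice_differentiable_Blinfun_apply[OF f, symmetric])
  have "f' (x + s *\<^sub>R d + (s\<^sup>2 / 2) *\<^sub>R w) (d + s *\<^sub>R w) - f' x d - s *\<^sub>R (f' x w + second_dir_deriv f x d)
      = blinfun_apply (D (x + s *\<^sub>R d + (s\<^sup>2 / 2) *\<^sub>R w)) (d + s *\<^sub>R w) - blinfun_apply (D x) d
        - s *\<^sub>R (blinfun_apply (D x) w + blinfun_apply (D2 d) d)"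
    by (simp only: Dapp sdd)
  also have "\<dots> = blinfun_apply R (d + s *\<^sub>R w) + (s * s) *\<^sub>R blinfun_apply (D2 d) w"
    unfolding R_def
    by (simp add: blinfun.diff_left blinfun.add_left blinfun.scaleR_left blinfun.add_right
        blinfun.scaleR_right algebra_simps)
  finally have "f' (x + s *\<^sub>R d + (s\<^sup>2 / 2) *\<^sub>R w) (d + s *\<^sub>R w) - f' x d
      - s *\<^sub>R (f' x w + second_dir_deriv f x d)
      = blinfun_apply R (d + s *\<^sub>R w) + (s * s) *\<^sub>R blinfun_apply (D2 d) w" .
  moreover have "norm (blinfun_apply R (d + s *\<^sub>R w)) \<le> \<eta> * s * (norm d + norm w)"
  proof -
    have "s * norm w \<le> norm w" using s by (simp add: mult_left_le_one_le)
    then have "norm (d + s *\<^sub>R w) \<le> norm d + norm w"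
      using norm_triangle_ineq[of d "s *\<^sub>R w"] s by simp
    then show ?thesis
      using norm_blinfun[of R "d + s *\<^sub>R w"] near
      by (simp add: R_def D2_def) (meson mult_mono norm_ge_zero order_trans)
  qed
  moreover have "norm ((s * s) *\<^sub>R blinfun_apply (D2 d) w) \<le> s\<^sup>2 * (norm (D2 d) * norm w)"
    using norm_blinfun[of "D2 d" w] s by (simp add: power2_eq_square mult_left_mono)
  ultimately show ?thesis
    unfolding D2_def by (metis (no_types, lifting) add_mono norm_triangle_le)
qed

lemma parabola_remainder_derivative_small:
  fixes f :: "'a::euclidean_space \<Rightarrow> 'b::real_normed_vector"
  assumes f: "twice_differentiable f" and \<epsilon>: "\<epsilon> > 0"
  defines "f' \<equiv> \<lambda>z. frechet_derivative f (at z)"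
  shows "\<exists>\<delta>>0. \<forall>s. 0 \<le> s \<and> s < \<delta> \<longrightarrow>
    norm (f' (x + s *\<^sub>R d + (s\<^sup>2 / 2) *\<^sub>R w) (d + s *\<^sub>R w) - f' x d - s *\<^sub>R (f' x w + second_dir_deriv f x d))
      \<le> \<epsilon> * s"
proof -
  define D where "D z = Blinfun (frechet_derivative f (at z))" for z
  define M where "M = norm d + norm w"
  define K where "K = norm (frechet_derivative D (at x) d) * norm w"
  define \<eta> where "\<eta> = \<epsilon> / (2 * (M + 1))"
  have "M \<ge> 0" "K \<ge> 0" by (simp_all add: M_def K_def)
  then have "\<eta> > 0" "\<eta> * M \<le> \<epsilon> / 2" using \<epsilon> by (simp_all add: \<eta>_def field_simps)
  obtain \<delta>\<^sub>1 where \<delta>\<^sub>1: "\<delta>\<^sub>1 > 0" "\<forall>s. 0 < s \<and> s < \<delta>\<^sub>1 \<longrightarrow>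
      norm (D (x + s *\<^sub>R d + (s\<^sup>2 / 2) *\<^sub>R w) - D x - s *\<^sub>R frechet_derivative D (at x) d) \<le> \<eta> * s"
    using derivative_along_parabola_le[OF f \<open>\<eta> > 0\<close>] unfolding D_def[abs_def] by blast
  define \<delta> where "\<delta> = min 1 (min \<delta>\<^sub>1 (\<epsilon> / (2 * (K + 1))))"
  show ?thesis
  proof (intro exI[of _ \<delta>] conjI allI impI)
    show "\<delta> > 0" using \<delta>\<^sub>1(1) \<epsilon> \<open>K \<ge> 0\<close> by (simp add: \<delta>_def)
    fix s assume s: "0 \<le> s \<and> s < \<delta>"
    show "norm (f' (x + s *\<^sub>R d + (s\<^sup>2 / 2) *\<^sub>R w) (d + s *\<^sub>R w) - f' x d
        - s *\<^sub>R (f' x w + second_dir_deriv f x d)) \<le> \<epsilon> * s"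
    proof (cases "s = 0")
      case True
      then show ?thesis by simp
    next
      case False
      with s have s: "0 < s" "s < \<delta>\<^sub>1" "s \<le> 1" "s \<le> \<epsilon> / (2 * (K + 1))" by (auto simp: \<delta>_def)
      have "s * K \<le> \<epsilon> / 2"
      proof -
        have "s * K \<le> \<epsilon> / (2 * (K + 1)) * (K + 1)"
          using s(1,4) \<open>K \<ge> 0\<close> by (intro mult_mono) auto
        also have "\<dots> = \<epsilon> / 2" using \<open>K \<ge> 0\<close> by (simp add: field_simps)
        finally show ?thesis .
      qed
      have "norm (f' (x + s *\<^sub>R d + (s\<^sup>2 / 2) *\<^sub>R w) (d + s *\<^sub>R w) - f' x d
          - s *\<^sub>R (f' x w + second_dir_deriv f x d)) \<le> \<eta> * s * M + s\<^sup>2 * K"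
        unfolding M_def K_def f'_def D_def[abs_def]
        by (rule parabola_remainder_derivative_le[OF f]) (use s \<delta>\<^sub>1(2) in \<open>auto simp: D_def[abs_def]\<close>)
      also have "\<dots> = s * (\<eta> * M + s * K)" by (simp add: power2_eq_square algebra_simps)
      also have "\<dots> \<le> s * (\<epsilon> / 2 + \<epsilon> / 2)"
        using s \<open>\<eta> * M \<le> \<epsilon> / 2\<close> \<open>s * K \<le> \<epsilon> / 2\<close> by (intro mult_left_mono add_mono) simp_all
      finally show ?thesis by (simp add: mult.commute)
    qed
  qed
qed

lemma twice_differentiable_taylor2_le:
  fixes f :: "'a::euclidean_space \<Rightarrow> 'b::real_normed_vector"
  assumes f: "twice_differentiable f" and \<epsilon>: "\<epsilon> > 0"
  defines "f' \<equiv> \<lambda>z. frechet_derivative f (at z)"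
  shows "\<exists>\<delta>>0. \<forall>t. 0 < t \<and> t < \<delta> \<longrightarrow>
    norm (f (x + t *\<^sub>R d + (t\<^sup>2 / 2) *\<^sub>R w) - f x - t *\<^sub>R f' x d
      - (t\<^sup>2 / 2) *\<^sub>R (f' x w + second_dir_deriv f x d))
      \<le> \<epsilon> * t\<^sup>2"
proof -
  define r' where "r' s = f' (x + s *\<^sub>R d + (s\<^sup>2 / 2) *\<^sub>R w) (d + s *\<^sub>R w) - f' x d
    - s *\<^sub>R (f' x w + second_dir_deriv f x d)" for s
  define r where "r s = f (x + s *\<^sub>R d + (s\<^sup>2 / 2) *\<^sub>R w) - f x - s *\<^sub>R f' x d
    - (s\<^sup>2 / 2) *\<^sub>R (f' x w + second_dir_deriv f x d)" for s
  obtain \<delta> where \<delta>: "\<delta> > 0" "\<forall>s. 0 \<le> s \<and> s < \<delta> \<longrightarrow> norm (r' s) \<le> \<epsilon> * s"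
    using parabola_remainder_derivative_small[OF f \<epsilon>] unfolding r'_def f'_def by blast
  have hr: "(r has_derivative (\<lambda>h. h *\<^sub>R r' s)) (at s within {0..t})" for s t
    unfolding r_def r'_def f'_def by (rule parabola_remainder_has_derivative[OF f])
  have bound: "norm (r' s) \<le> \<epsilon> * t" if "0 < t" "t < \<delta>" "s \<in> {0..t}" for s t
    using \<delta>(2)[rule_format, of s] that \<epsilon> by (auto intro: order_trans[OF _ mult_left_mono])
  have "norm (r t) \<le> \<epsilon> * t * t" if "0 < t" "t < \<delta>" for t
    by (rule norm_le_of_derivative_bound[OF bound[OF that] hr]) (use that in \<open>simp_all add: r_def\<close>)
  then show ?thesis
    using \<delta>(1) by (intro exI[of _ \<delta>]) (simp add: r_def power2_eq_square mult.assoc)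
qed

lemma twice_differentiable_taylor2_seq:
  fixes f :: "'a::euclidean_space \<Rightarrow> 'b::real_normed_vector"
  assumes f: "twice_differentiable f" and t: "\<And>k. 0 < t k" "t \<longlonglongrightarrow> 0"
  defines "f' \<equiv> \<lambda>z. frechet_derivative f (at z)"
  shows "(\<lambda>k. (1 / (t k)\<^sup>2) *\<^sub>R (f (x + t k *\<^sub>R d + ((t k)\<^sup>2 / 2) *\<^sub>R w) - f x - t k *\<^sub>R f' x d
      - ((t k)\<^sup>2 / 2) *\<^sub>R (f' x w + second_dir_deriv f x d))) \<longlonglongrightarrow> 0"
proof (rule tendstoI)
  fix \<epsilon> :: real assume "\<epsilon> > 0"
  then obtain \<delta> where \<delta>: "\<delta> > 0" "\<forall>s. 0 < s \<and> s < \<delta> \<longrightarrow>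
      norm (f (x + s *\<^sub>R d + (s\<^sup>2 / 2) *\<^sub>R w) - f x - s *\<^sub>R f' x d
        - (s\<^sup>2 / 2) *\<^sub>R (f' x w + second_dir_deriv f x d))
        \<le> \<epsilon> / 2 * s\<^sup>2"
    using twice_differentiable_taylor2_le[OF f, of "\<epsilon> / 2" x d w] unfolding f'_def by auto
  have "eventually (\<lambda>k. dist (t k) 0 < \<delta>) sequentially" by (rule tendstoD[OF t(2) \<delta>(1)])
  then show "eventually (\<lambda>k. dist ((1 / (t k)\<^sup>2) *\<^sub>R (f (x + t k *\<^sub>R d + ((t k)\<^sup>2 / 2) *\<^sub>R w) - f x
      - t k *\<^sub>R f' x d - ((t k)\<^sup>2 / 2) *\<^sub>R (f' x w + second_dir_deriv f x d))) 0 < \<epsilon>) sequentially"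
  proof eventually_elim
    case (elim k)
    then have "norm (f (x + t k *\<^sub>R d + ((t k)\<^sup>2 / 2) *\<^sub>R w) - f x - t k *\<^sub>R f' x d
        - ((t k)\<^sup>2 / 2) *\<^sub>R (f' x w + second_dir_deriv f x d)) \<le> \<epsilon> / 2 * (t k)\<^sup>2"
      using \<delta>(2) t(1)[of k] by simp
    moreover have "0 < \<epsilon> * (t k)\<^sup>2" using \<open>\<epsilon> > 0\<close> t(1)[of k] by simp
    ultimately show ?case using t(1)[of k] by (simp add: pos_divide_less_eq)
  qed
qed

lemma twice_differentiable_locally_lipschitz:
  fixes f :: "'a::euclidean_space \<Rightarrow> 'b::real_normed_vector"
  assumes f: "twice_differentiable f"
  shows "\<exists>L \<delta>. \<delta> > 0 \<and> L \<ge> 0 \<and> (\<forall>a b. dist a x < \<delta> \<longrightarrow> dist b x < \<delta> \<longrightarrow> dist (f a) (f b) \<le> L * dist a b)"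
proof -
  define D where "D z = Blinfun (frechet_derivative f (at z))" for z
  have "isCont D x"
    using f unfolding twice_differentiable_def D_def
    by (blast intro: differentiable_imp_continuous_within)
  then obtain \<delta> where \<delta>: "\<delta> > 0" "\<forall>z. dist z x < \<delta> \<longrightarrow> dist (D z) (D x) < 1"
    unfolding continuous_at_eps_delta by (meson zero_less_one)
  define L where "L = norm (D x) + 1"
  have bound: "onorm (frechet_derivative f (at z)) \<le> L" if "z \<in> ball x \<delta>" for z
  proof -
    have "onorm (frechet_derivative f (at z)) = norm (D z)"
      by (simp add: norm_blinfun.rep_eq D_def twice_differentiable_Blinfun_apply[OF f])
    also have "\<dots> \<le> norm (D x) + dist (D z) (D x)"
      by (metis dist_norm norm_triangle_sub)
    also have "\<dots> \<le> L"
    proof -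
      have "dist z x < \<delta>" using that by (simp add: dist_commute)
      then show ?thesis using \<delta>(2) by (simp add: L_def less_imp_le)
    qed
    finally show ?thesis .
  qed
  have "norm (f a - f b) \<le> L * norm (a - b)" if "dist a x < \<delta>" "dist b x < \<delta>" for a b
    by (rule differentiable_bound[OF convex_ball _ bound])
       (use that twice_differentiable_has_derivative[OF f] in
         \<open>auto simp: dist_commute intro: has_derivative_at_withinI\<close>)
  then show ?thesis
    using \<delta>(1) by (intro exI[of _ L] exI[of _ \<delta>]) (simp add: L_def dist_norm add_nonneg_nonneg)
qed

section \<open>Metric subregularity and exact penalization\<close>

lemma local_min_plus_dist_derivative_ge:
  fixes \<psi> :: "'a::real_normed_vector \<Rightarrow> real"
  assumes der: "(\<psi> has_derivative \<psi>') (at u)" and \<rho>: "\<rho> > 0" and c: "0 \<le> c"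
    and min: "\<And>z. dist z u < \<rho> \<Longrightarrow> \<psi> u + c * dist u x\<^sub>0 \<le> \<psi> z + c * dist z x\<^sub>0"
  shows "- (c * norm e) \<le> \<psi>' e"
proof -
  define a where "a = \<rho> / (norm e + 1)"
  have "0 < norm e + 1" using norm_ge_zero[of e] by linarith
  then have a: "0 < a" "a * (norm e + 1) = \<rho>" using \<rho> by (simp_all add: a_def)
  define t where "t k = a * inverse (real (Suc k))" for k
  have t: "0 < t k" "t k * norm e < \<rho>" for k
  proof -
    show "0 < t k" using a by (simp add: t_def)
    have "inverse (real (Suc k)) \<le> 1" by (simp add: inverse_le_1_iff)
    then have "t k \<le> a * 1" unfolding t_def using a by (intro mult_left_mono) auto
    then have "t k * norm e \<le> a * norm e" by (simp add: mult_right_mono)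
    also have "\<dots> < \<rho>" using a by (simp add: algebra_simps)
    finally show "t k * norm e < \<rho>" .
  qed
  have "t \<longlonglongrightarrow> a * 0"
    unfolding t_def[abs_def] by (intro tendsto_mult tendsto_const LIMSEQ_inverse_real_of_nat)
  then have "t \<longlonglongrightarrow> 0" by simp
  from has_derivative_dir_quotient_seq[OF der t(1) this]
  have lim: "(\<lambda>k. (1 / t k) *\<^sub>R (\<psi> (u + t k *\<^sub>R e) - \<psi> u)) \<longlonglongrightarrow> \<psi>' e" .
  have lower: "- (c * norm e) \<le> (1 / t k) *\<^sub>R (\<psi> (u + t k *\<^sub>R e) - \<psi> u)" for k
  proof -
    have "dist (u + t k *\<^sub>R e) u = t k * norm e" using t(1)[of k] by (simp add: dist_norm)
    then have "c * dist (u + t k *\<^sub>R e) x\<^sub>0 \<le> c * (dist u x\<^sub>0 + t k * norm e)"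
      using dist_triangle[of "u + t k *\<^sub>R e" x\<^sub>0 u] c by (intro mult_left_mono) auto
    moreover have "\<psi> u + c * dist u x\<^sub>0 \<le> \<psi> (u + t k *\<^sub>R e) + c * dist (u + t k *\<^sub>R e) x\<^sub>0"
      using min \<open>dist (u + t k *\<^sub>R e) u = t k * norm e\<close> t(2)[of k] by simp
    ultimately have "- (c * norm e) * t k \<le> \<psi> (u + t k *\<^sub>R e) - \<psi> u"
      by (simp add: algebra_simps)
    then show ?thesis using t(1)[of k] by (simp add: pos_le_divide_eq)
  qed
  show ?thesis using LIMSEQ_le_const[OF lim] lower by blast
qed

lemma penalized_minimizer_near:
  fixes U :: "'x::euclidean_space \<Rightarrow> 'a::real_normed_vector"
  assumes U: "continuous_on UNIV U" and C: "closed C" "C \<noteq> {}" and \<kappa>: "\<kappa> > 0"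
    and far: "\<And>x'. U x' \<in> C \<Longrightarrow> \<kappa> * infdist (U x\<^sub>0) C < dist x' x\<^sub>0"
  defines "\<rho> \<equiv> \<kappa> * infdist (U x\<^sub>0) C"
  shows "0 < \<rho> \<and> (\<exists>u. dist u x\<^sub>0 \<le> \<rho> / 2 \<and> U u \<notin> C \<and> (\<forall>z. dist z u < \<rho> / 2 \<longrightarrow>
    infdist (U u) C + 2 / \<kappa> * dist u x\<^sub>0 \<le> infdist (U z) C + 2 / \<kappa> * dist z x\<^sub>0))"
proof -
  have "U x\<^sub>0 \<notin> C" using far[of x\<^sub>0] by (auto simp: infdist_zero)
  then have "infdist (U x\<^sub>0) C > 0"
    using in_closed_iff_infdist_zero[OF C] infdist_nonneg[of "U x\<^sub>0" C] by fastforce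
  then have \<rho>: "\<rho> > 0" using \<kappa> by (simp add: \<rho>_def)
  define g where "g z = infdist (U z) C + 2 / \<kappa> * dist z x\<^sub>0" for z
  have "continuous_on (cball x\<^sub>0 \<rho>) g"
    unfolding g_def
    by (intro continuous_intros continuous_on_compose2[OF continuous_on_infdist[OF continuous_on_id]
          continuous_on_subset[OF U subset_UNIV]]) auto
  then obtain u where u: "u \<in> cball x\<^sub>0 \<rho>" "\<And>z. z \<in> cball x\<^sub>0 \<rho> \<Longrightarrow> g u \<le> g z"
    using continuous_attains_inf[OF compact_cball] \<rho> by (metis empty_iff centre_in_cball less_imp_le)
  have "2 / \<kappa> * dist u x\<^sub>0 \<le> g x\<^sub>0"
    using u(2)[of x\<^sub>0] \<rho> infdist_nonneg[of "U u" C] by (simp add: g_def)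
  then have du: "dist u x\<^sub>0 \<le> \<rho> / 2" using \<kappa> by (simp add: g_def \<rho>_def field_simps)
  have "U u \<notin> C" using far[of u] du \<rho> by (auto simp: \<rho>_def)
  moreover have "infdist (U u) C + 2 / \<kappa> * dist u x\<^sub>0 \<le> infdist (U z) C + 2 / \<kappa> * dist z x\<^sub>0"
    if "dist z u < \<rho> / 2" for z
  proof -
    have "z \<in> cball x\<^sub>0 \<rho>" using that du dist_triangle[of z x\<^sub>0 u] by (simp add: dist_commute)
    then show ?thesis using u(2) by (simp add: g_def)
  qed
  ultimately show ?thesis using \<rho> du by blast
qed

lemma almost_stationary_unit_normal:
  fixes U :: "'x::euclidean_space \<Rightarrow> 'a::euclidean_space"
  assumes C: "closed C" "C \<subseteq> E" "C \<noteq> {}" and E: "subspace E" and UE: "\<And>z. U z \<in> E"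
    and der: "\<And>z. (U has_derivative DU z) (at z)" and \<kappa>: "\<kappa> > 0"
    and far: "\<And>x'. U x' \<in> C \<Longrightarrow> \<kappa> * infdist (U x\<^sub>0) C < dist x' x\<^sub>0"
  shows "\<exists>u c n. dist u x\<^sub>0 \<le> \<kappa> * infdist (U x\<^sub>0) C \<and> c \<in> C \<and> infdist (U u) C = dist (U u) c \<and>
    n \<in> reg_normal_cone E C c \<and> norm n = 1 \<and> (\<forall>e. - (2 / \<kappa> * norm e) \<le> n \<bullet> DU u e)"
proof -
  have "continuous_on UNIV U"
    using der by (intro has_derivative_continuous_on) (blast intro: has_derivative_at_withinI)
  obtain u where u: "0 < \<kappa> * infdist (U x\<^sub>0) C" "dist u x\<^sub>0 \<le> \<kappa> * infdist (U x\<^sub>0) C / 2" "U u \<notin> C"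
    "\<And>z. dist z u < \<kappa> * infdist (U x\<^sub>0) C / 2 \<Longrightarrow>
      infdist (U u) C + 2 / \<kappa> * dist u x\<^sub>0 \<le> infdist (U z) C + 2 / \<kappa> * dist z x\<^sub>0"
    using penalized_minimizer_near[OF \<open>continuous_on UNIV U\<close> C(1,3) \<kappa> far] by blast
  obtain c where c: "c \<in> C" "infdist (U u) C = dist (U u) c"
    using infdist_attains_inf[OF C(1,3)] by blast
  have "U u - c \<noteq> 0" using c(1) u(3) by auto
  have normal: "U u - c \<in> reg_normal_cone E C c"
    using c C(2) by (intro proximal_normal subspace_diff[OF E UE]) auto
  define n where "n = sgn (U u - c)"
  have "n \<in> reg_normal_cone E C c" "norm n = 1"
    using reg_normal_cone_scaleR[OF normal E, of "inverse (norm (U u - c))"] \<open>U u - c \<noteq> 0\<close>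
    by (simp_all add: n_def sgn_div_norm divide_inverse_commute norm_sgn)
  moreover have "- (2 / \<kappa> * norm e) \<le> n \<bullet> DU u e" for e
  proof -
    have hd: "((\<lambda>z. norm (U z - c)) has_derivative (\<lambda>h. (DU u h - 0) \<bullet> n)) (at u)"
      unfolding n_def
      by (rule has_derivative_compose[OF has_derivative_diff[OF der has_derivative_const]
            has_derivative_norm[OF \<open>U u - c \<noteq> 0\<close>]])
    have hmin: "norm (U u - c) + 2 / \<kappa> * dist u x\<^sub>0 \<le> norm (U z - c) + 2 / \<kappa> * dist z x\<^sub>0"
      if "dist z u < \<kappa> * infdist (U x\<^sub>0) C / 2" for z
      using u(4)[OF that] infdist_le[OF c(1), of "U z"] c(2) by (simp add: dist_norm)
    have "- (2 / \<kappa> * norm e) \<le> (DU u e - 0) \<bullet> n"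
      by (rule local_min_plus_dist_derivative_ge[where \<rho> = "\<kappa> * infdist (U x\<^sub>0) C / 2", OF hd _ _ hmin])
         (use u(1) \<kappa> in auto)
    then show ?thesis by (simp add: inner_commute)
  qed
  moreover have "dist u x\<^sub>0 \<le> \<kappa> * infdist (U x\<^sub>0) C" using u(1,2) by linarith
  ultimately show ?thesis using c by blast
qed

lemma subregularity_failure_seq:
  fixes U :: "'x::euclidean_space \<Rightarrow> 'a::euclidean_space"
  assumes C: "closed C" "C \<subseteq> E" and E: "subspace E" and UE: "\<And>z. U z \<in> E" and feas: "U xs \<in> C"
    and der: "\<And>z. (U has_derivative DU z) (at z)"
    and fail: "\<not> (\<exists>\<kappa>>0. \<exists>\<delta>>0. \<forall>x. dist x xs < \<delta> \<longrightarrow> (\<exists>x'. U x' \<in> C \<and> dist x' x \<le> \<kappa> * infdist (U x) C))"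
  shows "\<exists>u c n. u \<longlonglongrightarrow> xs \<and> (\<forall>k. c k \<in> C) \<and> c \<longlonglongrightarrow> U xs \<and> (\<forall>k. n k \<in> reg_normal_cone E C (c k)) \<and>
    (\<forall>k. norm (n k) = 1) \<and> (\<forall>k e. - (2 / real (Suc k) * norm e) \<le> n k \<bullet> DU (u k) e)"
proof -
  have "\<forall>\<kappa>>0. \<forall>\<delta>>0. \<exists>x. dist x xs < \<delta> \<and> (\<forall>x'. U x' \<in> C \<longrightarrow> \<kappa> * infdist (U x) C < dist x' x)"
    using fail by (auto simp: not_le)
  then have "\<forall>k. \<exists>x. dist x xs < inverse (real (Suc k)) \<and>
      (\<forall>x'. U x' \<in> C \<longrightarrow> real (Suc k) * infdist (U x) C < dist x' x)"
    by simp
  then have "\<exists>x. \<forall>k. dist (x k) xs < inverse (real (Suc k)) \<and>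
      (\<forall>x'. U x' \<in> C \<longrightarrow> real (Suc k) * infdist (U (x k)) C < dist x' (x k))"
    by (rule choice)
  then obtain x where x: "\<And>k. dist (x k) xs < inverse (real (Suc k))"
    "\<And>k x'. U x' \<in> C \<Longrightarrow> real (Suc k) * infdist (U (x k)) C < dist x' (x k)"
    by blast
  define P where "P k u c n \<longleftrightarrow> dist u (x k) \<le> real (Suc k) * infdist (U (x k)) C \<and> c \<in> C \<and>
    infdist (U u) C = dist (U u) c \<and> n \<in> reg_normal_cone E C c \<and> norm n = 1 \<and>
    (\<forall>e. - (2 / real (Suc k) * norm e) \<le> n \<bullet> DU u e)" for k u c n
  have "C \<noteq> {}" using feas by auto
  have "\<forall>k. \<exists>u c n. P k u c n"
    using almost_stationary_unit_normal[OF C \<open>C \<noteq> {}\<close> E UE der _ x(2)] unfolding P_def by simp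
  then have "\<exists>u. \<forall>k. \<exists>c n. P k (u k) c n" by (rule choice)
  then obtain u where "\<forall>k. \<exists>c n. P k (u k) c n" ..
  then have "\<exists>c. \<forall>k. \<exists>n. P k (u k) (c k) n" by (rule choice)
  then obtain c where "\<forall>k. \<exists>n. P k (u k) (c k) n" ..
  then have "\<exists>n. \<forall>k. P k (u k) (c k) (n k)" by (rule choice)
  then obtain n where P: "\<And>k. P k (u k) (c k) (n k)" by blast
  have bound: "dist (u k) xs \<le> 2 * inverse (real (Suc k))" for k
  proof -
    have "dist (u k) (x k) < dist xs (x k)" using P[of k] x(2)[OF feas, of k] by (simp add: P_def)
    then show ?thesis using dist_triangle[of "u k" xs "x k"] x(1)[of k] by (simp add: dist_commute)
  qed
  have "(\<lambda>k. 2 * inverse (real (Suc k))) \<longlonglongrightarrow> 0"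
    using tendsto_mult[OF tendsto_const LIMSEQ_inverse_real_of_nat, of 2] by simp
  then have u: "u \<longlonglongrightarrow> xs" by (rule tendsto_of_dist_le[OF bound])
  have "(\<lambda>k. U (u k)) \<longlonglongrightarrow> U xs"
    by (rule isCont_tendsto_compose[OF has_derivative_continuous[OF der] u])
  then have "c \<longlonglongrightarrow> U xs"
    by (rule nearest_points_tendsto[OF feas]) (use P in \<open>simp add: P_def\<close>)
  with u P show ?thesis unfolding P_def by blast
qed

lemma metric_subregularity:
  fixes U :: "'x::euclidean_space \<Rightarrow> 'a::euclidean_space"
  assumes C: "closed C" "C \<subseteq> E" and E: "subspace E" and UE: "\<And>z. U z \<in> E" and feas: "U xs \<in> C"
    and der: "\<And>z. (U has_derivative DU z) (at z)" and cont: "\<And>e. isCont (\<lambda>z. DU z e) xs"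
    and cq: "\<And>v. v \<in> lim_normal_cone E C (U xs) \<Longrightarrow> (\<And>e. v \<bullet> DU xs e = 0) \<Longrightarrow> v = 0"
  shows "\<exists>\<kappa>>0. \<exists>\<delta>>0. \<forall>x. dist x xs < \<delta> \<longrightarrow> (\<exists>x'. U x' \<in> C \<and> dist x' x \<le> \<kappa> * infdist (U x) C)"
proof (rule ccontr)
  assume "\<not> ?thesis"
  then obtain u c n where u: "u \<longlonglongrightarrow> xs" and c: "\<And>k. c k \<in> C" "c \<longlonglongrightarrow> U xs"
    and n: "\<And>k. n k \<in> reg_normal_cone E C (c k)" "\<And>k. norm (n k) = 1"
    and stat: "\<And>k e. - (2 / real (Suc k) * norm e) \<le> n k \<bullet> DU (u k) e"
    using subregularity_failure_seq[OF C E UE feas der] by blast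
  obtain \<nu> r where \<nu>: "\<nu> \<in> lim_normal_cone E C (U xs)" "norm \<nu> = 1" "strict_mono r" "(n \<circ> r) \<longlonglongrightarrow> \<nu>"
    by (rule unit_reg_normals_converge_to_lim_normal[OF c n])
  have ge: "0 \<le> \<nu> \<bullet> DU xs e" for e
  proof -
    have l1: "(\<lambda>k. n (r k) \<bullet> DU (u (r k)) e) \<longlonglongrightarrow> \<nu> \<bullet> DU xs e"
      using \<nu>(4) isCont_tendsto_compose[OF cont LIMSEQ_subseq_LIMSEQ[OF u \<nu>(3)]]
      by (intro tendsto_intros) (simp_all add: o_def)
    have l2: "(\<lambda>k. - (2 / real (Suc (r k)) * norm e)) \<longlonglongrightarrow> - (0 * norm e)"
      using LIMSEQ_subseq_LIMSEQ[OF tendsto_mult_right_zero[OF LIMSEQ_inverse_real_of_nat, of 2] \<nu>(3)]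
      by (intro tendsto_intros) (simp add: o_def divide_inverse mult.commute)
    have "- (0 * norm e) \<le> \<nu> \<bullet> DU xs e"
      by (rule LIMSEQ_le[OF l2 l1]) (use stat in blast)
    then show ?thesis by simp
  qed
  have "\<nu> \<bullet> DU xs e = 0" for e
    using ge[of e] ge[of "- e"] linear_neg[OF has_derivative_linear[OF der[of xs]], of e] by simp
  then have "\<nu> = 0" by (rule cq[OF \<nu>(1)])
  with \<nu>(2) show False by simp
qed

lemma exact_penalty:
  fixes \<phi> :: "'x::metric_space \<Rightarrow> real" and U :: "'x \<Rightarrow> 'a::metric_space"
  assumes feas: "U xs \<in> C" and contU: "isCont U xs"
    and subreg: "\<exists>\<kappa>>0. \<exists>\<delta>>0. \<forall>x. dist x xs < \<delta> \<longrightarrow> (\<exists>x'. U x' \<in> C \<and> dist x' x \<le> \<kappa> * infdist (U x) C)"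
    and lip: "\<exists>L \<delta>. \<delta> > 0 \<and> L \<ge> 0 \<and>
      (\<forall>a b. dist a xs < \<delta> \<longrightarrow> dist b xs < \<delta> \<longrightarrow> dist (\<phi> a) (\<phi> b) \<le> L * dist a b)"
    and locmin: "\<exists>\<epsilon>>0. \<forall>x. U x \<in> C \<and> dist x xs < \<epsilon> \<longrightarrow> \<phi> xs \<le> \<phi> x"
  shows "\<exists>c\<ge>0. \<forall>\<^sub>F x in nhds xs. \<phi> xs \<le> \<phi> x + c * infdist (U x) C"
proof -
  obtain \<kappa> \<delta>\<^sub>0 where \<kappa>: "\<kappa> > 0" "\<delta>\<^sub>0 > 0"
    "\<And>x. dist x xs < \<delta>\<^sub>0 \<Longrightarrow> \<exists>x'. U x' \<in> C \<and> dist x' x \<le> \<kappa> * infdist (U x) C"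
    using subreg by blast
  obtain L \<delta>\<^sub>L where L: "\<delta>\<^sub>L > 0" "L \<ge> 0"
    "\<And>a b. dist a xs < \<delta>\<^sub>L \<Longrightarrow> dist b xs < \<delta>\<^sub>L \<Longrightarrow> dist (\<phi> a) (\<phi> b) \<le> L * dist a b"
    using lip by blast
  obtain \<epsilon> where \<epsilon>: "\<epsilon> > 0" "\<And>x. U x \<in> C \<Longrightarrow> dist x xs < \<epsilon> \<Longrightarrow> \<phi> xs \<le> \<phi> x"
    using locmin by blast
  define m where "m = min \<delta>\<^sub>0 (min \<delta>\<^sub>L \<epsilon>)"
  have m: "m > 0" using \<kappa> L \<epsilon> by (simp add: m_def)
  have "\<forall>\<^sub>F x in nhds xs. dist x xs < m / 2"
    using m by (auto simp: eventually_nhds_metric intro: exI[of _ "m / 2"])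
  moreover have "\<forall>\<^sub>F x in nhds xs. dist (U x) (U xs) < m / (2 * \<kappa>)"
    using contU m \<kappa>(1) by (intro tendstoD) (simp_all add: isCont_def tendsto_at_iff_tendsto_nhds)
  ultimately have "\<forall>\<^sub>F x in nhds xs. \<phi> xs \<le> \<phi> x + L * \<kappa> * infdist (U x) C"
  proof eventually_elim
    case (elim x)
    have dx: "dist x xs < m" using elim(1) m by linarith
    then have "dist x xs < \<delta>\<^sub>0" by (simp add: m_def)
    then obtain x' where x': "U x' \<in> C" "dist x' x \<le> \<kappa> * infdist (U x) C"
      using \<kappa>(3) by blast
    have "\<kappa> * infdist (U x) C \<le> \<kappa> * dist (U x) (U xs)"
      using infdist_le[OF feas] \<kappa>(1) by simp
    also have "\<dots> < m / 2" using elim \<kappa>(1) by (simp add: field_simps)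
    finally have "dist x' xs < m" using x'(2) elim dist_triangle[of x' xs x] by linarith
    then have "\<phi> xs \<le> \<phi> x'" "dist (\<phi> x') (\<phi> x) \<le> L * dist x' x"
      using \<epsilon>(2)[OF x'(1)] L(3)[of x' x] dx by (simp_all add: m_def)
    moreover have "L * dist x' x \<le> L * (\<kappa> * infdist (U x) C)" using x'(2) L(2) by (rule mult_left_mono)
    ultimately show ?case by (simp add: dist_real_def abs_le_iff)
  qed
  then show ?thesis using L(2) \<kappa>(1) by (intro exI[of _ "L * \<kappa>"]) simp
qed

lemma penalty_quotient_limit_nonneg:
  assumes pen: "\<forall>\<^sub>F x in nhds xs. \<phi> xs \<le> \<phi> x + c * infdist (U x) C"
    and x: "x \<longlonglongrightarrow> xs" and \<tau>: "\<And>k. 0 < \<tau> k"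
    and dist: "(\<lambda>k. infdist (U (x k)) C / \<tau> k) \<longlonglongrightarrow> 0"
    and quot: "(\<lambda>k. (\<phi> (x k) - \<phi> xs) / \<tau> k) \<longlonglongrightarrow> L"
  shows "0 \<le> (L::real)"
proof -
  have "\<forall>\<^sub>F k in sequentially. \<phi> xs \<le> \<phi> (x k) + c * infdist (U (x k)) C"
    using eventually_compose_filterlim[OF pen x] .
  then have ev: "\<forall>\<^sub>F k in sequentially. 0 \<le> (\<phi> (x k) - \<phi> xs) / \<tau> k + c * (infdist (U (x k)) C / \<tau> k)"
  proof eventually_elim
    case (elim k)
    then have "0 \<le> (\<phi> (x k) - \<phi> xs + c * infdist (U (x k)) C) / \<tau> k" using \<tau>[of k] by simp
    then show ?case by (simp add: add_divide_distrib)
  qed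
  have "(\<lambda>k. (\<phi> (x k) - \<phi> xs) / \<tau> k + c * (infdist (U (x k)) C / \<tau> k)) \<longlonglongrightarrow> L + c * 0"
    by (intro tendsto_add tendsto_mult quot dist tendsto_const)
  from tendsto_lowerbound[OF this ev] show ?thesis by simp
qed

section \<open>Multipliers and second-order conditions\<close>

lemma orthogonal_to_perp_imp_in_span:
  fixes q :: "'a::euclidean_space"
  assumes "\<And>l. (\<forall>u\<in>N. l \<bullet> u = 0) \<Longrightarrow> q \<bullet> l = 0"
  shows "q \<in> span N"
proof -
  obtain a b where ab: "a \<in> span N" "\<And>w. w \<in> span N \<Longrightarrow> orthogonal b w" "q = a + b"
    using orthogonal_subspace_decomp_exists by metis
  have "\<forall>u\<in>N. b \<bullet> u = 0" using ab(2) span_base by (auto simp: orthogonal_def)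
  then have "q \<bullet> b = 0" by (rule assms)
  moreover have "a \<bullet> b = 0" using ab(2)[OF ab(1)] by (simp add: orthogonal_def inner_commute)
  ultimately have "b = 0" using ab(3) by (simp add: inner_add_left)
  with ab show ?thesis by simp
qed

lemma range_plus_perp_decomposition:
  fixes A :: "'x::euclidean_space \<Rightarrow> 'a::euclidean_space"
  assumes A: "linear A" and cq: "\<And>v. v \<in> span N \<Longrightarrow> (\<And>e. A e \<bullet> v = 0) \<Longrightarrow> v = 0"
  shows "\<exists>w l. z = A w + l \<and> (\<forall>u\<in>N. l \<bullet> u = 0)"
proof -
  define L where "L = {l. \<forall>u\<in>N. l \<bullet> u = 0}"
  have "subspace L" unfolding L_def subspace_def by (auto simp: inner_add_left)
  obtain p q where pq: "p \<in> span (range A \<union> L)"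
    "\<And>w. w \<in> span (range A \<union> L) \<Longrightarrow> orthogonal q w" "z = p + q"
    using orthogonal_subspace_decomp_exists by metis
  have "A e \<bullet> q = 0" for e
    using pq(2)[of "A e"] span_base[of "A e"] by (simp add: orthogonal_def inner_commute)
  moreover have "q \<in> span N"
  proof (rule orthogonal_to_perp_imp_in_span)
    fix l assume "\<forall>u\<in>N. l \<bullet> u = 0"
    then show "q \<bullet> l = 0" using pq(2)[of l] span_base[of l] by (simp add: L_def orthogonal_def)
  qed
  ultimately have "q = 0" using cq by blast
  have sA: "span (range A) = range A" and sL: "span L = L"
    using linear_subspace_image[OF A subspace_UNIV] \<open>subspace L\<close> by simp_all
  have "span (range A \<union> L) = {a + l |a l. a \<in> range A \<and> l \<in> L}"
    unfolding span_Un sA sL ..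
  then show ?thesis using pq(1,3) \<open>q = 0\<close> by (auto simp: L_def)
qed

locale qualified_local_minimizer =
  fixes \<phi> :: "'x::euclidean_space \<Rightarrow> real" and U :: "'x \<Rightarrow> 'a::euclidean_space"
    and C E :: "'a set" and xs :: 'x
  assumes twice_differentiable_\<phi>: "twice_differentiable \<phi>"
    and twice_differentiable_U: "twice_differentiable U"
    and closed_C: "closed C" and C_subset_E: "C \<subseteq> E" and subspace_E: "subspace E"
    and U_in_E: "\<And>z. U z \<in> E" and feasible: "U xs \<in> C"
    and local_min: "\<exists>\<epsilon>>0. \<forall>x. U x \<in> C \<and> dist x xs < \<epsilon> \<longrightarrow> \<phi> xs \<le> \<phi> x"
    and qualification: "span (lim_normal_cone E C (U xs))
      \<inter> {\<mu>. adjoint (frechet_derivative U (at xs)) \<mu> = 0} = {0}"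
begin

abbreviation "N \<equiv> lim_normal_cone E C (U xs)"
abbreviation "DU \<equiv> frechet_derivative U (at xs)"
abbreviation "D\<phi> \<equiv> frechet_derivative \<phi> (at xs)"

lemma has_derivative_U: "(U has_derivative frechet_derivative U (at z)) (at z)"
  by (rule twice_differentiable_has_derivative[OF twice_differentiable_U])

lemma has_derivative_\<phi>: "(\<phi> has_derivative D\<phi>) (at xs)"
  by (rule twice_differentiable_has_derivative[OF twice_differentiable_\<phi>])

lemma linear_DU: "linear DU"
  by (rule has_derivative_linear[OF has_derivative_U])

lemma DU_in_E: "DU e \<in> E"
  by (rule has_derivative_in_closed_subspace[OF has_derivative_U closed_subspace[OF subspace_E]
        subspace_E U_in_E])

lemma span_normals_subset_E: "span N \<subseteq> E"
  using lim_normal_cone_subset_subspace[OF subspace_E] subspace_E by (rule span_minimal)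

lemma qualification_orthogonal:
  assumes "v \<in> span N" "\<And>e. DU e \<bullet> v = 0"
  shows "v = 0"
proof -
  have "adjoint DU v \<bullet> adjoint DU v = 0" using adjoint_works[OF linear_DU] assms(2) by metis
  then show ?thesis using qualification assms(1) by auto
qed

lemma orthogonal_span_normals:
  assumes "\<forall>u\<in>N. l \<bullet> u = 0" "\<mu> \<in> span N"
  shows "\<mu> \<bullet> l = 0"
  using orthogonal_to_span[OF assms(2), of l] assms(1) by (simp add: orthogonal_def inner_commute)

lemma exact_penalty_at_minimizer: "\<exists>c\<ge>0. \<forall>\<^sub>F x in nhds xs. \<phi> xs \<le> \<phi> x + c * infdist (U x) C"
proof (rule exact_penalty[OF feasible has_derivative_continuous[OF has_derivative_U] _
      twice_differentiable_locally_lipschitz[OF twice_differentiable_\<phi>] local_min])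
  show "\<exists>\<kappa>>0. \<exists>\<delta>>0. \<forall>x. dist x xs < \<delta> \<longrightarrow> (\<exists>x'. U x' \<in> C \<and> dist x' x \<le> \<kappa> * infdist (U x) C)"
  proof (rule metric_subregularity[OF closed_C C_subset_E subspace_E U_in_E feasible has_derivative_U
        twice_differentiable_isCont_derivative[OF twice_differentiable_U]])
    fix v assume "v \<in> N" "\<And>e. v \<bullet> DU e = 0"
    then show "v = 0" by (intro qualification_orthogonal span_base) (simp_all add: inner_commute)
  qed
qed

lemma tangent_direction_nonneg:
  assumes "DU d \<in> tangent_cone C (U xs)"
  shows "0 \<le> D\<phi> d"
proof -
  obtain t c where t: "\<And>k. 0 < t k" "t \<longlonglongrightarrow> 0" and c: "\<forall>k. c k \<in> C"
    and lim: "(\<lambda>k. (1 / t k) *\<^sub>R (c k - U xs)) \<longlonglongrightarrow> DU d"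
    using assms unfolding tangent_cone_def by blast
  obtain pc where pen: "\<forall>\<^sub>F x in nhds xs. \<phi> xs \<le> \<phi> x + pc * infdist (U x) C"
    using exact_penalty_at_minimizer by blast
  define x where "x k = xs + t k *\<^sub>R d" for k
  have "x \<longlonglongrightarrow> xs + 0 *\<^sub>R d" unfolding x_def[abs_def] by (intro tendsto_intros t(2))
  then have x: "x \<longlonglongrightarrow> xs" by simp
  have "(\<lambda>k. (1 / t k) *\<^sub>R (\<phi> (x k) - \<phi> xs)) \<longlonglongrightarrow> D\<phi> d"
    unfolding x_def by (rule has_derivative_dir_quotient_seq[OF has_derivative_\<phi> t])
  then have quot: "(\<lambda>k. (\<phi> (x k) - \<phi> xs) / t k) \<longlonglongrightarrow> D\<phi> d" by simp
  have qU: "(\<lambda>k. (1 / t k) *\<^sub>R (U (x k) - U xs)) \<longlonglongrightarrow> DU d"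
    unfolding x_def by (rule has_derivative_dir_quotient_seq[OF has_derivative_U t])
  have "(\<lambda>k. infdist (U (x k)) C / t k) \<longlonglongrightarrow> 0"
  proof (rule Lim_null_comparison[OF always_eventually])
    show "(\<lambda>k. norm ((1 / t k) *\<^sub>R (U (x k) - U xs) - (1 / t k) *\<^sub>R (c k - U xs))) \<longlonglongrightarrow> 0"
      using tendsto_norm[OF tendsto_diff[OF qU lim]] by simp
    show "\<forall>k. norm (infdist (U (x k)) C / t k)
        \<le> norm ((1 / t k) *\<^sub>R (U (x k) - U xs) - (1 / t k) *\<^sub>R (c k - U xs))"
    proof
      fix k
      have "infdist (U (x k)) C \<le> norm (U (x k) - c k)"
        using infdist_le[OF c[rule_format]] by (simp add: dist_norm)
      moreover have "(1 / t k) *\<^sub>R (U (x k) - U xs) - (1 / t k) *\<^sub>R (c k - U xs)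
          = (1 / t k) *\<^sub>R (U (x k) - c k)"
        by (simp add: algebra_simps)
      ultimately show "norm (infdist (U (x k)) C / t k)
          \<le> norm ((1 / t k) *\<^sub>R (U (x k) - U xs) - (1 / t k) *\<^sub>R (c k - U xs))"
        using t(1)[of k] by (simp add: infdist_nonneg divide_right_mono)
    qed
  qed
  then show ?thesis by (rule penalty_quotient_limit_nonneg[OF pen x t(1) _ quot])
qed

lemma derivative_vanishes_on_perp_directions:
  assumes "\<forall>u\<in>N. DU q \<bullet> u = 0"
  shows "D\<phi> q = 0"
proof -
  have "0 + l \<in> tangent_cone C (U xs)" if "l = DU q \<or> l = DU (- q)" for l
  proof (rule tangent_cone_translate_perp[OF closed_C C_subset_E subspace_E feasible _ _
        zero_in_tangent_cone[OF feasible]])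
    show "l \<in> E" using that DU_in_E by blast
    show "\<forall>u\<in>N. l \<bullet> u = 0" using that assms linear_neg[OF linear_DU, of q] by auto
  qed
  then have "0 \<le> D\<phi> q" "0 \<le> D\<phi> (- q)" using tangent_direction_nonneg by simp_all
  then show ?thesis using linear_neg[OF has_derivative_linear[OF has_derivative_\<phi>], of q] by simp
qed

lemma E_decomposition:
  assumes "z \<in> E"
  obtains w l where "z = DU w + l" "l \<in> E" "\<forall>u\<in>N. l \<bullet> u = 0"
proof -
  obtain w l where "z = DU w + l" "\<forall>u\<in>N. l \<bullet> u = 0"
    using range_plus_perp_decomposition[OF linear_DU qualification_orthogonal] by blast
  moreover have "l \<in> E" using calculation(1) assms DU_in_E subspace_E
    by (metis add_diff_cancel_left' subspace_diff)
  ultimately show ?thesis using that by blast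
qed

lemma multiplier_exists: "\<exists>\<mu>\<in>span N. \<forall>e. D\<phi> e + \<mu> \<bullet> DU e = 0"
proof -
  define g where "g = adjoint D\<phi> 1"
  have g: "D\<phi> e = e \<bullet> g" for e
    using adjoint_works[OF has_derivative_linear[OF has_derivative_\<phi>], of e 1] by (simp add: g_def)
  define S where "S = adjoint DU ` span N"
  have "subspace S" unfolding S_def
    by (rule linear_subspace_image[OF adjoint_linear[OF linear_DU] subspace_span])
  obtain p q where pq: "p \<in> span S" "\<And>w. w \<in> span S \<Longrightarrow> orthogonal q w" "g = p + q"
    using orthogonal_subspace_decomp_exists by metis
  have "DU q \<bullet> u = 0" if "u \<in> N" for u
    using pq(2)[of "adjoint DU u"] that adjoint_works[OF linear_DU, of q u]
    by (simp add: S_def span_base orthogonal_def)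
  then have "q \<bullet> g = 0" using derivative_vanishes_on_perp_directions g by simp
  moreover have "q \<bullet> p = 0" using pq(2)[OF pq(1)] by (simp add: orthogonal_def)
  ultimately have "q = 0" using pq(3) by (simp add: inner_add_right)
  have "span S = S" using \<open>subspace S\<close> by simp
  moreover have "g \<in> span S" using pq(1,3) \<open>q = 0\<close> by simp
  ultimately have "g \<in> S" by (simp only:)
  then obtain s where s: "s \<in> span N" "g = adjoint DU s" by (auto simp: S_def)
  have "D\<phi> e + (- s) \<bullet> DU e = 0" for e
    using g[of e] adjoint_works[OF linear_DU, of e s] s(2) by (simp add: inner_commute)
  then show ?thesis using s(1) span_neg by blast
qed

lemma multiplier_unique:
  assumes "\<mu> \<in> span N" "\<forall>e. D\<phi> e + \<mu> \<bullet> DU e = 0" "\<nu> \<in> span N" "\<forall>e. D\<phi> e + \<nu> \<bullet> DU e = 0"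
  shows "\<mu> = \<nu>"
proof -
  have "\<mu> - \<nu> = 0"
  proof (rule qualification_orthogonal)
    show "\<mu> - \<nu> \<in> span N" using assms(1,3) by (rule span_diff)
    show "DU e \<bullet> (\<mu> - \<nu>) = 0" for e
      using assms(2,4)[rule_format, of e] inner_diff_left[of \<mu> \<nu> "DU e"] by (simp add: inner_commute)
  qed
  then show ?thesis by simp
qed

lemma stationary_multiplier_regular_normal:
  assumes \<mu>: "\<mu> \<in> span N" "\<forall>e. D\<phi> e + \<mu> \<bullet> DU e = 0"
  shows "\<mu> \<in> reg_normal_cone E C (U xs)"
  unfolding reg_normal_cone_def
proof (intro CollectI conjI ballI)
  show "\<mu> \<in> E" using \<mu>(1) span_normals_subset_E by blast
  fix v assume v: "v \<in> tangent_cone C (U xs)"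
  then have "v \<in> E" using tangent_cone_subset_subspace[OF C_subset_E subspace_E feasible] by blast
  then obtain w l where wl: "v = DU w + l" "l \<in> E" "\<forall>u\<in>N. l \<bullet> u = 0" by (rule E_decomposition)
  have "v + (- l) \<in> tangent_cone C (U xs)"
    using wl subspace_neg[OF subspace_E]
    by (intro tangent_cone_translate_perp[OF closed_C C_subset_E subspace_E feasible _ _ v]) auto
  then have "0 \<le> D\<phi> w" using wl(1) tangent_direction_nonneg by simp
  moreover have "\<mu> \<bullet> l = 0" by (rule orthogonal_span_normals[OF wl(3) \<mu>(1)])
  ultimately show "\<mu> \<bullet> v \<le> 0" using \<mu>(2)[rule_format, of w] wl(1) by (simp add: inner_add_right)
qed

lemma lagrangian_derivative:
  "frechet_derivative (\<lambda>z. \<phi> z + \<mu> \<bullet> U z) (at xs) = (\<lambda>d. D\<phi> d + \<mu> \<bullet> DU d)"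
  by (intro frechet_derivative_at[symmetric] has_derivative_add has_derivative_\<phi>
      has_derivative_inner_right has_derivative_U)

lemma twice_differentiable_lagrangian: "twice_differentiable (\<lambda>z. \<phi> z + \<mu> \<bullet> U z)"
  by (intro twice_differentiable_add twice_differentiable_\<phi>
      twice_differentiable_bounded_linear_compose[OF twice_differentiable_U bounded_linear_inner_right])

lemma second_order_curve_infdist:
  assumes "DU w + second_dir_deriv U xs d \<in> outer_so_tangent C (U xs) (DU d)"
  obtains t where "\<forall>k. 0 < t k" "t \<longlonglongrightarrow> 0"
    "(\<lambda>k. infdist (U (xs + t k *\<^sub>R d + ((t k)\<^sup>2 / 2) *\<^sub>R w)) C / (t k)\<^sup>2) \<longlonglongrightarrow> 0"
proof -
  define V where "V = DU w + second_dir_deriv U xs d"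
  obtain t where t: "\<forall>k. 0 < t k" "t \<longlonglongrightarrow> 0"
    and lim: "(\<lambda>k. infdist (U xs + t k *\<^sub>R DU d + ((t k)\<^sup>2 / 2) *\<^sub>R V) C / (t k)\<^sup>2) \<longlonglongrightarrow> 0"
    using assms unfolding outer_so_tangent_def V_def by blast
  define x where "x k = xs + t k *\<^sub>R d + ((t k)\<^sup>2 / 2) *\<^sub>R w" for k
  define a where "a k = U xs + t k *\<^sub>R DU d + ((t k)\<^sup>2 / 2) *\<^sub>R V" for k
  define R where "R k = (1 / (t k)\<^sup>2) *\<^sub>R (U (x k) - a k)" for k
  have "R \<longlonglongrightarrow> 0"
    unfolding R_def x_def a_def V_def diff_diff_add[symmetric] add.assoc[symmetric]
    by (rule twice_differentiable_taylor2_seq[OF twice_differentiable_U t[rule_format]])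
  then have sum: "(\<lambda>k. infdist (a k) C / (t k)\<^sup>2 + norm (R k)) \<longlonglongrightarrow> 0 + 0"
    using lim unfolding a_def by (intro tendsto_add tendsto_norm_zero)
  have bound: "\<forall>k. norm (infdist (U (x k)) C / (t k)\<^sup>2) \<le> infdist (a k) C / (t k)\<^sup>2 + norm (R k)"
  proof
    fix k
    have "(t k)\<^sup>2 > 0" using t(1)[rule_format, of k] by simp
    then have "norm (U (x k) - a k) = (t k)\<^sup>2 * norm (R k)" by (simp add: R_def)
    then have "infdist (U (x k)) C \<le> infdist (a k) C + (t k)\<^sup>2 * norm (R k)"
      using infdist_triangle[of "U (x k)" C "a k"] by (simp add: dist_norm)
    then have "infdist (U (x k)) C / (t k)\<^sup>2 \<le> (infdist (a k) C + (t k)\<^sup>2 * norm (R k)) / (t k)\<^sup>2"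
      using \<open>(t k)\<^sup>2 > 0\<close> by (simp add: divide_right_mono)
    also have "\<dots> = infdist (a k) C / (t k)\<^sup>2 + norm (R k)"
      using \<open>(t k)\<^sup>2 > 0\<close> by (simp add: add_divide_distrib)
    finally show "norm (infdist (U (x k)) C / (t k)\<^sup>2) \<le> infdist (a k) C / (t k)\<^sup>2 + norm (R k)"
      by (simp add: abs_of_nonneg[OF infdist_nonneg])
  qed
  have "(\<lambda>k. infdist (U (x k)) C / (t k)\<^sup>2) \<longlonglongrightarrow> 0"
    using Lim_null_comparison[OF always_eventually[OF bound]] sum by simp
  then have "(\<lambda>k. infdist (U (xs + t k *\<^sub>R d + ((t k)\<^sup>2 / 2) *\<^sub>R w)) C / (t k)\<^sup>2) \<longlonglongrightarrow> 0"
    by (simp add: x_def)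
  with t show ?thesis using that by blast
qed

lemma lagrangian_second_order_quotient:
  fixes d w :: 'x
  assumes \<mu>: "\<forall>e. D\<phi> e + \<mu> \<bullet> DU e = 0" "\<mu> \<bullet> DU d = 0" and t: "\<And>k. 0 < t k" "t \<longlonglongrightarrow> 0"
  defines "x \<equiv> \<lambda>k. xs + t k *\<^sub>R d + ((t k)\<^sup>2 / 2) *\<^sub>R w"
  shows "(\<lambda>k. (\<phi> (x k) - \<phi> xs) / (t k)\<^sup>2)
    \<longlonglongrightarrow> (hess_quad (\<lambda>z. \<phi> z + \<mu> \<bullet> U z) xs d - \<mu> \<bullet> (DU w + second_dir_deriv U xs d)) / 2"
proof -
  let ?L = "\<lambda>z. \<phi> z + \<mu> \<bullet> U z"
  let ?Q = "hess_quad ?L xs d"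
  let ?V = "DU w + second_dir_deriv U xs d"
  have L': "frechet_derivative ?L (at xs) = (\<lambda>_. 0)"
    using \<mu>(1) by (simp add: lagrangian_derivative)
  have RL: "(\<lambda>k. (1 / (t k)\<^sup>2) *\<^sub>R (?L (x k) - ?L xs - ((t k)\<^sup>2 / 2) *\<^sub>R ?Q)) \<longlonglongrightarrow> 0"
    using twice_differentiable_taylor2_seq[OF twice_differentiable_lagrangian[of \<mu>] t, of xs d w]
    by (simp add: L' x_def hess_quad_eq_second_dir_deriv)
  have RU: "(\<lambda>k. \<mu> \<bullet> ((1 / (t k)\<^sup>2) *\<^sub>R (U (x k) - U xs - t k *\<^sub>R DU d - ((t k)\<^sup>2 / 2) *\<^sub>R ?V))) \<longlonglongrightarrow> \<mu> \<bullet> 0"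
    unfolding x_def
    by (intro tendsto_inner tendsto_const twice_differentiable_taylor2_seq[OF twice_differentiable_U t])
  have "(\<phi> (x k) - \<phi> xs) / (t k)\<^sup>2
      = (1 / (t k)\<^sup>2) *\<^sub>R (?L (x k) - ?L xs - ((t k)\<^sup>2 / 2) *\<^sub>R ?Q)
        - \<mu> \<bullet> ((1 / (t k)\<^sup>2) *\<^sub>R (U (x k) - U xs - t k *\<^sub>R DU d - ((t k)\<^sup>2 / 2) *\<^sub>R ?V))
        + (?Q - \<mu> \<bullet> ?V) / 2" for k
    using t(1)[of k] \<mu>(2) by (simp add: inner_diff_right inner_add_right field_simps power2_eq_square)
  moreover have "(\<lambda>k. (1 / (t k)\<^sup>2) *\<^sub>R (?L (x k) - ?L xs - ((t k)\<^sup>2 / 2) *\<^sub>R ?Q)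
      - \<mu> \<bullet> ((1 / (t k)\<^sup>2) *\<^sub>R (U (x k) - U xs - t k *\<^sub>R DU d - ((t k)\<^sup>2 / 2) *\<^sub>R ?V))
      + (?Q - \<mu> \<bullet> ?V) / 2) \<longlonglongrightarrow> 0 - \<mu> \<bullet> 0 + (?Q - \<mu> \<bullet> ?V) / 2"
    by (intro tendsto_add tendsto_diff RL RU tendsto_const)
  ultimately show ?thesis by simp
qed

lemma second_order_bound:
  assumes \<mu>: "\<mu> \<in> span N" "\<forall>e. D\<phi> e + \<mu> \<bullet> DU e = 0"
    and d: "DU d \<in> tangent_cone C (U xs)" "D\<phi> d \<le> 0"
    and z: "z \<in> outer_so_tangent C (U xs) (DU d)"
  shows "\<mu> \<bullet> z \<le> hess_quad (\<lambda>x. \<phi> x + \<mu> \<bullet> U x) xs d"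
proof -
  define V where "V = second_dir_deriv U xs d"
  have "D\<phi> d = 0" using d tangent_direction_nonneg by (simp add: order_antisym)
  then have "\<mu> \<bullet> DU d = 0" using \<mu>(2)[rule_format, of d] by simp
  have "V \<in> E" unfolding V_def
    by (rule second_dir_deriv_in_closed_subspace[OF twice_differentiable_U closed_subspace[OF subspace_E]
          subspace_E U_in_E])
  moreover have "z \<in> E"
    using outer_so_tangent_subset_subspace[OF C_subset_E subspace_E feasible DU_in_E closed_C] z by blast
  ultimately have "z - V \<in> E" using subspace_diff[OF subspace_E] by blast
  then obtain w l where wl: "z - V = DU w + l" "l \<in> E" "\<forall>u\<in>N. l \<bullet> u = 0"
    by (rule E_decomposition)
  \<comment> \<open>Translating by \<open>- l\<close> keeps \<open>z\<close> a second-order tangent vector and, as \<open>\<mu> \<in> span N\<close>,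
    does not change \<open>\<mu> \<bullet> z\<close>.\<close>
  have "z + (- l) \<in> outer_so_tangent C (U xs) (DU d)"
    using wl subspace_neg[OF subspace_E]
    by (intro outer_so_tangent_translate_perp[OF closed_C C_subset_E subspace_E feasible _ _ z]) auto
  then have "DU w + V \<in> outer_so_tangent C (U xs) (DU d)"
    using wl(1) by (simp add: algebra_simps)
  then obtain t where t: "\<forall>k. 0 < t k" "t \<longlonglongrightarrow> 0"
    and dist: "(\<lambda>k. infdist (U (xs + t k *\<^sub>R d + ((t k)\<^sup>2 / 2) *\<^sub>R w)) C / (t k)\<^sup>2) \<longlonglongrightarrow> 0"
    unfolding V_def by (rule second_order_curve_infdist)
  obtain c where pen: "\<forall>\<^sub>F x in nhds xs. \<phi> xs \<le> \<phi> x + c * infdist (U x) C"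
    using exact_penalty_at_minimizer by blast
  have "(\<lambda>k. xs + t k *\<^sub>R d + ((t k)\<^sup>2 / 2) *\<^sub>R w) \<longlonglongrightarrow> xs + 0 *\<^sub>R d + (0\<^sup>2 / 2) *\<^sub>R w"
    by (intro tendsto_intros t(2)) simp_all
  then have x: "(\<lambda>k. xs + t k *\<^sub>R d + ((t k)\<^sup>2 / 2) *\<^sub>R w) \<longlonglongrightarrow> xs" by simp
  have "0 < (t k)\<^sup>2" for k using t(1)[rule_format, of k] by simp
  from penalty_quotient_limit_nonneg[OF pen x this dist lagrangian_second_order_quotient[OF \<mu>(2)
          \<open>\<mu> \<bullet> DU d = 0\<close> t(1)[rule_format] t(2)]]
  have "0 \<le> (hess_quad (\<lambda>x. \<phi> x + \<mu> \<bullet> U x) xs d - \<mu> \<bullet> (DU w + V)) / 2"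
    by (simp add: V_def)
  moreover have "\<mu> \<bullet> (DU w + V) = \<mu> \<bullet> z"
    using wl(1) orthogonal_span_normals[OF wl(3) \<mu>(1)] by (simp add: algebra_simps inner_diff_right)
  ultimately show ?thesis by simp
qed

theorem unique_multiplier_second_order:
  "\<exists>\<mu>s. {\<mu>. frechet_derivative (\<lambda>z. \<phi> z + \<mu> \<bullet> U z) (at xs) = (\<lambda>_. 0)
          \<and> \<mu> \<in> reg_normal_cone E C (U xs)} = {\<mu>s}
     \<and> {\<mu>. frechet_derivative (\<lambda>z. \<phi> z + \<mu> \<bullet> U z) (at xs) = (\<lambda>_. 0) \<and> \<mu> \<in> N} = {\<mu>s}
     \<and> {\<mu>. frechet_derivative (\<lambda>z. \<phi> z + \<mu> \<bullet> U z) (at xs) = (\<lambda>_. 0)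
          \<and> \<mu> \<in> clarke_normal_cone E C (U xs)} = {\<mu>s}
     \<and> (\<forall>d \<in> {d. D\<phi> d \<le> 0 \<and> DU d \<in> tangent_cone C (U xs)}.
          ereal (hess_quad (\<lambda>z. \<phi> z + \<mu>s \<bullet> U z) xs d)
          - support_fun \<mu>s (outer_so_tangent C (U xs) (DU d)) \<ge> 0)"
proof -
  obtain \<mu>s where \<mu>s: "\<mu>s \<in> span N" "\<forall>e. D\<phi> e + \<mu>s \<bullet> DU e = 0"
    using multiplier_exists by blast
  have reg: "\<mu>s \<in> reg_normal_cone E C (U xs)" by (rule stationary_multiplier_regular_normal[OF \<mu>s])
  have cones: "reg_normal_cone E C (U xs) \<subseteq> N" "N \<subseteq> clarke_normal_cone E C (U xs)"
    "clarke_normal_cone E C (U xs) \<subseteq> span N"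
    by (rule reg_normal_cone_subset_lim_normal_cone[OF feasible] lim_normal_cone_subset_clarke_normal_cone
        clarke_normal_cone_subset_span)+
  have sets: "{\<mu>. frechet_derivative (\<lambda>z. \<phi> z + \<mu> \<bullet> U z) (at xs) = (\<lambda>_. 0) \<and> \<mu> \<in> R} = {\<mu>s}"
    if "\<mu>s \<in> R" "R \<subseteq> span N" for R
  proof (intro equalityI subsetI)
    fix \<mu> assume "\<mu> \<in> {\<mu>. frechet_derivative (\<lambda>z. \<phi> z + \<mu> \<bullet> U z) (at xs) = (\<lambda>_. 0) \<and> \<mu> \<in> R}"
    then have "\<mu> \<in> span N" "\<forall>e. D\<phi> e + \<mu> \<bullet> DU e = 0"
      using that(2) by (auto simp: lagrangian_derivative fun_eq_iff)
    then show "\<mu> \<in> {\<mu>s}" using multiplier_unique[OF _ _ \<mu>s] by simp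
  qed (use that(1) \<mu>s(2) in \<open>simp add: lagrangian_derivative fun_eq_iff\<close>)
  have "ereal (hess_quad (\<lambda>z. \<phi> z + \<mu>s \<bullet> U z) xs d)
      - support_fun \<mu>s (outer_so_tangent C (U xs) (DU d)) \<ge> 0"
    if "D\<phi> d \<le> 0" "DU d \<in> tangent_cone C (U xs)" for d
  proof -
    have "support_fun \<mu>s (outer_so_tangent C (U xs) (DU d)) \<le> ereal (hess_quad (\<lambda>z. \<phi> z + \<mu>s \<bullet> U z) xs d)"
      unfolding support_fun_def using second_order_bound[OF \<mu>s that(2,1)] by (simp add: SUP_least)
    then show ?thesis by (cases "support_fun \<mu>s (outer_so_tangent C (U xs) (DU d))") auto
  qed
  note second_order = this
  have "{\<mu>. frechet_derivative (\<lambda>z. \<phi> z + \<mu> \<bullet> U z) (at xs) = (\<lambda>_. 0)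
      \<and> \<mu> \<in> reg_normal_cone E C (U xs)} = {\<mu>s}"
    "{\<mu>. frechet_derivative (\<lambda>z. \<phi> z + \<mu> \<bullet> U z) (at xs) = (\<lambda>_. 0) \<and> \<mu> \<in> N} = {\<mu>s}"
    "{\<mu>. frechet_derivative (\<lambda>z. \<phi> z + \<mu> \<bullet> U z) (at xs) = (\<lambda>_. 0)
      \<and> \<mu> \<in> clarke_normal_cone E C (U xs)} = {\<mu>s}"
    using reg cones by (intro sets; blast)+
  with second_order show ?thesis by (intro exI[of _ \<mu>s]) auto
qed

end

section \<open>The semidefinite complementarity constrained problem\<close>

lemma quadratic_form_eq_sum:
  "v \<bullet> ((A::real^'n::finite^'n) *v v) = (\<Sum>i\<in>UNIV. \<Sum>j\<in>UNIV. v$i * (A$i$j * v$j))"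
  by (simp add: inner_vec_def matrix_vector_mult_def sum_distrib_left)

lemma subspace_sym_mats: "subspace (sym_mats :: (real^'n::finite^'n) set)"
  unfolding subspace_def sym_mats_def by (auto simp: transpose_def vec_eq_iff)

lemma closed_psd_cone: "closed (psd_cone :: (real^'n::finite^'n) set)"
proof -
  have eq: "psd_cone = sym_mats \<inter> (\<Inter>v. {A::real^'n^'n. 0 \<le> (\<Sum>i\<in>UNIV. \<Sum>j\<in>UNIV. v$i * (A$i$j * v$j))})"
    by (auto simp: psd_cone_def quadratic_form_eq_sum)
  have c: "closed {A::real^'n^'n. 0 \<le> (\<Sum>i\<in>UNIV. \<Sum>j\<in>UNIV. v$i * (A$i$j * v$j))}" for v
    by (intro closed_Collect_le continuous_intros)
  show ?thesis
    unfolding eq by (intro closed_Int closed_subspace[OF subspace_sym_mats] closed_INT ballI c)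
qed

lemma closed_nsd_cone: "closed (nsd_cone :: (real^'n::finite^'n) set)"
proof -
  have eq: "nsd_cone = sym_mats \<inter> (\<Inter>v. {A::real^'n^'n. (\<Sum>i\<in>UNIV. \<Sum>j\<in>UNIV. v$i * (A$i$j * v$j)) \<le> 0})"
    by (auto simp: nsd_cone_def quadratic_form_eq_sum)
  have c: "closed {A::real^'n^'n. (\<Sum>i\<in>UNIV. \<Sum>j\<in>UNIV. v$i * (A$i$j * v$j)) \<le> 0}" for v
    by (intro closed_Collect_le continuous_intros)
  show ?thesis
    unfolding eq by (intro closed_Int closed_subspace[OF subspace_sym_mats] closed_INT ballI c)
qed

lemma closed_Omega_set: "closed (Omega_set :: ((real^'n::finite^'n) \<times> (real^'n^'n)) set)"
proof -
  have eq: "Omega_set = (psd_cone \<times> nsd_cone) \<inter> {p::(real^'n^'n) \<times> (real^'n^'n). fst p \<bullet> snd p = 0}"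
    by (auto simp: Omega_set_def)
  have c: "closed {p::(real^'n^'n) \<times> (real^'n^'n). fst p \<bullet> snd p = 0}"
    by (intro closed_Collect_eq continuous_intros)
  show ?thesis unfolding eq by (intro closed_Int closed_Times closed_psd_cone closed_nsd_cone c)
qed

lemma Omega_set_subset_sym_mats: "Omega_set \<subseteq> sym_mats \<times> sym_mats"
  by (auto simp: Omega_set_def psd_cone_def nsd_cone_def)

lemma subspace_mult_space:
  "subspace (mult_space :: ('y::euclidean_space \<times> ((real^'n::finite^'n) \<times> (real^'n^'n))) set)"
  unfolding mult_space_def by (intro subspace_Times subspace_UNIV subspace_sym_mats)

lemma twice_differentiable_Ups:
  fixes h :: "'x::euclidean_space \<Rightarrow> 'y::euclidean_space" and \<theta> \<zeta> :: "'x \<Rightarrow> real^'n::finite^'n"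
  assumes "twice_differentiable h" "twice_differentiable \<theta>" "twice_differentiable \<zeta>"
  shows "twice_differentiable (Ups h \<theta> \<zeta>)"
proof -
  have eq: "Ups h \<theta> \<zeta> = (\<lambda>z. (h z, 0, 0) + (0, \<theta> z, 0) + (0, 0, \<zeta> z))"
    by (simp add: Ups_def fun_eq_iff)
  show ?thesis
    unfolding eq by (intro twice_differentiable_add
        twice_differentiable_bounded_linear_compose[OF assms(1), of "\<lambda>y. (y, 0, 0)"]
        twice_differentiable_bounded_linear_compose[OF assms(2), of "\<lambda>A. (0, A, 0)"]
        twice_differentiable_bounded_linear_compose[OF assms(3), of "\<lambda>B. (0, 0, B)"]
        bounded_linear_Pair bounded_linear_ident bounded_linear_zero)
qed

lemma Lag_eq_inner_Ups: "Lag \<phi> h \<theta> \<zeta> x \<mu> = \<phi> x + \<mu> \<bullet> Ups h \<theta> \<zeta> x"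
  by (cases \<mu>) (simp add: Lag_def Ups_def)

theorem corollary5p3:
  fixes \<phi> :: "'x::euclidean_space \<Rightarrow> real"
    and h :: "'x \<Rightarrow> 'y::euclidean_space"
    and \<theta> \<zeta> :: "'x \<Rightarrow> real^'n::finite^'n"
    and K :: "'y set"
    and xs :: 'x
  assumes "twice_differentiable \<phi>" "twice_differentiable h"
    and "twice_differentiable \<theta>" "twice_differentiable \<zeta>"
    and "\<forall>x. \<theta> x \<in> sym_mats" "\<forall>x. \<zeta> x \<in> sym_mats"
    and "closed K" "convex K" "cone K" "so_regular K"
    and feas: "Ups h \<theta> \<zeta> xs \<in> K \<times> Omega_set"
    and locopt: "\<exists>\<epsilon>>0. \<forall>x. Ups h \<theta> \<zeta> x \<in> K \<times> Omega_set \<and> dist x xs < \<epsilon> \<longrightarrow> \<phi> xs \<le> \<phi> x"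
    and cq: "span (lim_normal_cone mult_space (K \<times> Omega_set) (Ups h \<theta> \<zeta> xs))
             \<inter> {\<mu>. adjoint (frechet_derivative (Ups h \<theta> \<zeta>) (at xs)) \<mu> = 0} = {0}"
  shows "\<exists>\<mu>s. {\<mu>. frechet_derivative (\<lambda>z. Lag \<phi> h \<theta> \<zeta> z \<mu>) (at xs) = (\<lambda>_. 0) \<and>
                  \<mu> \<in> reg_normal_cone mult_space (K \<times> Omega_set) (Ups h \<theta> \<zeta> xs)} = {\<mu>s}
          \<and> {\<mu>. frechet_derivative (\<lambda>z. Lag \<phi> h \<theta> \<zeta> z \<mu>) (at xs) = (\<lambda>_. 0) \<and>
                  \<mu> \<in> lim_normal_cone mult_space (K \<times> Omega_set) (Ups h \<theta> \<zeta> xs)} = {\<mu>s}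
          \<and> {\<mu>. frechet_derivative (\<lambda>z. Lag \<phi> h \<theta> \<zeta> z \<mu>) (at xs) = (\<lambda>_. 0) \<and>
                  \<mu> \<in> clarke_normal_cone mult_space (K \<times> Omega_set) (Ups h \<theta> \<zeta> xs)} = {\<mu>s}
          \<and> (\<forall>d \<in> {d. frechet_derivative \<phi> (at xs) d \<le> 0 \<and>
                        frechet_derivative (Ups h \<theta> \<zeta>) (at xs) d
                          \<in> tangent_cone (K \<times> Omega_set) (Ups h \<theta> \<zeta> xs)}.
               ereal (hess_quad (\<lambda>z. Lag \<phi> h \<theta> \<zeta> z \<mu>s) xs d)
               - support_fun \<mu>s (outer_so_tangent (K \<times> Omega_set) (Ups h \<theta> \<zeta> xs)
                                   (frechet_derivative (Ups h \<theta> \<zeta>) (at xs) d)) \<ge> 0)"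
proof -
  interpret qualified_local_minimizer \<phi> "Ups h \<theta> \<zeta>" "K \<times> Omega_set" mult_space xs
  proof
    show "twice_differentiable (Ups h \<theta> \<zeta>)" using assms(2-4) by (rule twice_differentiable_Ups)
    show "closed (K \<times> Omega_set)" using assms(7) closed_Omega_set by (rule closed_Times)
    show "K \<times> Omega_set \<subseteq> mult_space" using Omega_set_subset_sym_mats by (auto simp: mult_space_def)
    show "Ups h \<theta> \<zeta> z \<in> mult_space" for z using assms(5,6) by (simp add: Ups_def mult_space_def)
  qed (rule assms(1) subspace_mult_space feas locopt cq)+
  show ?thesis
    using unique_multiplier_second_order by (simp only: Lag_eq_inner_Ups)
qed

end
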